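(* Fix $d\ge1$ and partitions $\mu,\lambda$ with $\ell(\mu),\ell(\lambda)\le d$. Then $$G_\mu(\mathbf y_\lambda\mid\mathbf y)\,\big(wt(\lambda/\mu)-1\big)=\sum_{\nu\mapsto\mu}\beta^{|\nu/\mu|}G_\nu(\mathbf y_\lambda\mid\mathbf y),\qquad\text{where}\quad wt(\lambda/\mu):=\prod_{i=1}^d\frac{1+\beta y_{\mu_i+d-i+1}}{1+\beta y_{\lambda_i+d-i+1}}.$$
   Context: Let $\beta$, $y_1,y_2,\dots$ be indeterminates; $x\oplus y:=x+y+\beta xy$, $x\ominus y:=(x-y)/(1+\beta y)$, $\ominus x:=0\ominus x$. Partitions are identified with Young diagrams (English convention), with $\lambda_i=0$ for $i>\ell(\lambda)$. For a partition $\mu$, $\operatorname{SSVT}_d(\mu)$ is the set of assignments of a nonempty subset $T(u)\subseteq\{1,\dots,d\}$ to each cell $u$ of $\mu$ with $\max T(u)\le\min T(u')$ for $u'$ immediately right of $u$ and $\max T(u)<\min T(u')$ for $u'$ immediately below $u$; $\operatorname{ne}(T)=\sum_u|T(u)|$. The factorial Grothendieck polynomial is $G_\mu(x_1,\dots,x_d\mid\mathbf y)=\sum_{T\in\operatorname{SSVT}_d(\mu)}\beta^{\operatorname{ne}(T)-|\mu|}\prod_{u\in\mu,\ r\in T(u)}(x_r\oplus y_{r+c(u)})$, with $c(u)=j-i$ for $u=(i,j)$. For $\ell(\lambda)\le d$, $\mathbf y_\lambda$ is the point whose $i$-th coordinate is $\ominus y_{\lambda_i+d-i+1}$, $i=1,\dots,d$.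 We write $\nu\mapsto\mu$ if $\mu\subseteq\nu$, $\nu\ne\mu$, and the cells of $\nu/\mu$ lie in pairwise distinct rows and pairwise distinct columns. *)

theory Defs
  imports Main
begin

definition is_partition :: "nat list \<Rightarrow> bool" where
  "is_partition la \<longleftrightarrow> sorted_wrt (\<ge>) la \<and> (\<forall>p\<in>set la. 0 < p)"

definition part :: "nat list \<Rightarrow> nat \<Rightarrow> nat" where
  "part la i = (if 1 \<le> i \<and> i \<le> length la then la ! (i - 1) else 0)"

text \<open>Young diagram, English convention: cell (i,j) = row i, column j, 1-indexed.\<close>
definition cells :: "nat list \<Rightarrow> (nat \<times> nat) set" where
  "cells la = {(i, j). 1 \<le> i \<and> i \<le> length la \<and> 1 \<le> j \<and> j \<le> part la i}"

definition psize :: "nat list \<Rightarrow> nat" where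
  "psize la = sum_list la"

definition goplus :: "'a::field \<Rightarrow> 'a \<Rightarrow> 'a \<Rightarrow> 'a" where
  "goplus \<beta> x y = x + y + \<beta> * x * y"

definition gominus :: "'a::field \<Rightarrow> 'a \<Rightarrow> 'a \<Rightarrow> 'a" where
  "gominus \<beta> x y = (x - y) / (1 + \<beta> * y)"

definition gneg :: "'a::field \<Rightarrow> 'a \<Rightarrow> 'a" where
  "gneg \<beta> x = gominus \<beta> 0 x"

definition SSVT :: "nat \<Rightarrow> nat list \<Rightarrow> (nat \<times> nat \<Rightarrow> nat set) set" where
  "SSVT d mu = {T. (\<forall>u. u \<notin> cells mu \<longrightarrow> T u = {})
     \<and> (\<forall>u\<in>cells mu. T u \<noteq> {} \<and> T u \<subseteq> {1..d})
     \<and> (\<forall>i j. (i, j) \<in> cells mu \<and> (i, j + 1) \<in> cells mu \<longrightarrow> Max (T (i, j)) \<le> Min (T (i, j + 1)))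
     \<and> (\<forall>i j. (i, j) \<in> cells mu \<and> (i + 1, j) \<in> cells mu \<longrightarrow> Max (T (i, j)) < Min (T (i + 1, j)))}"

definition ne :: "nat list \<Rightarrow> (nat \<times> nat \<Rightarrow> nat set) \<Rightarrow> nat" where
  "ne mu T = (\<Sum>u\<in>cells mu. card (T u))"

text \<open>Content c(u) = j - i; the index r + c(u) is always \<ge> 1 for tableaux (r \<ge> i).\<close>
definition content_idx :: "nat \<Rightarrow> nat \<times> nat \<Rightarrow> nat" where
  "content_idx r u = nat (int r + int (snd u) - int (fst u))"

definition G :: "'a::field \<Rightarrow> nat \<Rightarrow> nat list \<Rightarrow> (nat \<Rightarrow> 'a) \<Rightarrow> (nat \<Rightarrow> 'a) \<Rightarrow> 'a" where
  "G \<beta> d mu x y = (\<Sum>T\<in>SSVT d mu. \<beta> ^ (ne mu T - psize mu) *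
     (\<Prod>u\<in>cells mu. \<Prod>r\<in>T u. goplus \<beta> (x r) (y (content_idx r u))))"

definition ypt :: "'a::field \<Rightarrow> nat \<Rightarrow> (nat \<Rightarrow> 'a) \<Rightarrow> nat list \<Rightarrow> nat \<Rightarrow> 'a" where
  "ypt \<beta> d y la i = gneg \<beta> (y (part la i + d - i + 1))"

definition wt :: "'a::field \<Rightarrow> nat \<Rightarrow> (nat \<Rightarrow> 'a) \<Rightarrow> nat list \<Rightarrow> nat list \<Rightarrow> 'a" where
  "wt \<beta> d y la mu = (\<Prod>i=1..d. (1 + \<beta> * y (part mu i + d - i + 1)) / (1 + \<beta> * y (part la i + d - i + 1)))"

definition covers :: "nat list \<Rightarrow> nat list \<Rightarrow> bool" where
  "covers nu mu \<longleftrightarrow> is_partition nu \<and> cells mu \<subseteq> cells nu \<and> nu \<noteq> mu \<and>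
     (\<forall>u\<in>cells nu - cells mu. \<forall>v\<in>cells nu - cells mu. u \<noteq> v \<longrightarrow> fst u \<noteq> fst v \<and> snd u \<noteq> snd v)"

end

theory Submission
  imports Defs
begin

text \<open>The identity is the specialisation \<open>x = y\<^sub>\<lambda>\<close> of a Pieri rule that holds for all \<open>x\<close>:
  \<open>\<Prod>\<^sub>i (1 + \<beta> x\<^sub>i) \<cdot> \<Prod>\<^sub>i (1 + \<beta> y\<^bsub>\<mu>\<^sub>i+d-i+1\<^esub>) \<cdot> G\<^sub>\<mu>(x|y) = \<Sum>\<^sub>T \<beta>\<^bsup>|T|\<^esup> G\<^bsub>\<mu>+T\<^esub>(x|y)\<close>,
  where \<open>T\<close> runs over the sets of rows of \<open>\<mu>\<close> to which one box each can be added (so \<open>\<mu>+T \<mapsto> \<mu>\<close>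
  or \<open>T = {}\<close>).  Since \<open>1 + \<beta> (\<ominus>v) = 1 / (1 + \<beta> v)\<close>, at \<open>x = y\<^sub>\<lambda>\<close> the prefactor is \<open>wt(\<lambda>/\<mu>)\<close>,
  and the term \<open>T = {}\<close> is \<open>G\<^sub>\<mu>\<close> itself.

  The Pieri rule is proved by induction on \<open>d\<close>.  Deleting the entry \<open>d\<close> from a set-valued
  tableau leaves a tableau of a shape \<open>k\<close> interlacing \<open>\<mu>\<close>, with an explicit weight that is a
  product over rows (branching rule).  Expanding both sides by the branching rule and the
  induction hypothesis, the coefficients of each \<open>G\<^bsub>d-1\<^esub>(\<cdot>|y)\<close> agree because both factor over
  the rows: on one side by telescoping the content factors, on the other by a transfer-matrix
  computation with an explicit gauge vector.\<close>

section \<open>Set-valued tableaux on arbitrary sets of cells\<close>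

definition ssvt_on :: "nat \<Rightarrow> (nat \<times> nat) set \<Rightarrow> (nat \<times> nat \<Rightarrow> nat set) set" where
  "ssvt_on d D = {T. (\<forall>u. u \<notin> D \<longrightarrow> T u = {})
     \<and> (\<forall>u\<in>D. T u \<noteq> {} \<and> T u \<subseteq> {1..d})
     \<and> (\<forall>i j. (i, j) \<in> D \<and> (i, j + 1) \<in> D \<longrightarrow> Max (T (i, j)) \<le> Min (T (i, j + 1)))
     \<and> (\<forall>i j. (i, j) \<in> D \<and> (i + 1, j) \<in> D \<longrightarrow> Max (T (i, j)) < Min (T (i + 1, j)))}"

definition cell_factor :: "'a::field \<Rightarrow> (nat \<Rightarrow> 'a) \<Rightarrow> (nat \<Rightarrow> 'a) \<Rightarrow> nat \<Rightarrow> nat \<times> nat \<Rightarrow> 'a" where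
  "cell_factor \<beta> x y r u = goplus \<beta> (x r) (y (content_idx r u))"

definition tableau_weight ::
  "'a::field \<Rightarrow> (nat \<Rightarrow> 'a) \<Rightarrow> (nat \<Rightarrow> 'a) \<Rightarrow> (nat \<times> nat) set \<Rightarrow> (nat \<times> nat \<Rightarrow> nat set) \<Rightarrow> 'a" where
  "tableau_weight \<beta> x y D T =
     \<beta> ^ ((\<Sum>u\<in>D. card (T u)) - card D) * (\<Prod>u\<in>D. \<Prod>r\<in>T u. cell_factor \<beta> x y r u)"

definition G_on :: "'a::field \<Rightarrow> nat \<Rightarrow> (nat \<times> nat) set \<Rightarrow> (nat \<Rightarrow> 'a) \<Rightarrow> (nat \<Rightarrow> 'a) \<Rightarrow> 'a" where
  "G_on \<beta> d D x y = (\<Sum>T\<in>ssvt_on d D. tableau_weight \<beta> x y D T)"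

lemma finite_ssvt_on: assumes "finite D" shows "finite (ssvt_on d D)"
proof -
  have "ssvt_on d D \<subseteq> {T. \<forall>u. (u \<in> D \<longrightarrow> T u \<in> Pow {1..d}) \<and> (u \<notin> D \<longrightarrow> T u = {})}"
    unfolding ssvt_on_def by auto
  moreover have "finite {T. \<forall>u. (u \<in> D \<longrightarrow> T u \<in> Pow {1..d}) \<and> (u \<notin> D \<longrightarrow> T u = {})}"
    by (rule finite_set_of_finite_funs) (use assms in auto)
  ultimately show ?thesis by (rule finite_subset)
qed

lemma ssvt_onD:
  assumes "T \<in> ssvt_on d D"
  shows "\<And>u. u \<notin> D \<Longrightarrow> T u = {}" "\<And>u. u \<in> D \<Longrightarrow> T u \<noteq> {}"
    "\<And>u. u \<in> D \<Longrightarrow> T u \<subseteq> {1..d}" "\<And>u. finite (T u)"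
    "\<And>i j. (i, j) \<in> D \<Longrightarrow> (i, j + 1) \<in> D \<Longrightarrow> Max (T (i, j)) \<le> Min (T (i, j + 1))"
    "\<And>i j. (i, j) \<in> D \<Longrightarrow> (i + 1, j) \<in> D \<Longrightarrow> Max (T (i, j)) < Min (T (i + 1, j))"
  using assms unfolding ssvt_on_def by auto (metis finite.emptyI finite_atLeastAtMost finite_subset)

lemma ssvt_on_Max_le:
  assumes "T \<in> ssvt_on d D" "u \<in> D" shows "Max (T u) \<le> d"
  using ssvt_onD(2-4)[OF assms(1)] assms(2) by (meson Max_in atLeastAtMost_iff subset_iff)

lemma ssvt_on_Min_le:
  assumes "T \<in> ssvt_on d D" "u \<in> D" shows "Min (T u) \<le> d"
  using ssvt_onD(2-4)[OF assms(1)] assms(2) by (meson Min_in atLeastAtMost_iff subset_iff)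

lemma Suc_notin_ssvt_on:
  assumes "T \<in> ssvt_on d D" shows "Suc d \<notin> T u"
proof (cases "u \<in> D")
  case True
  have "Suc d \<notin> {1..d}" by simp
  thus ?thesis using ssvt_onD(3)[OF assms True] by blast
qed (simp add: ssvt_onD(1)[OF assms])

text \<open>A tableau with entries \<open>\<le> d + 1\<close> on \<open>D\<close> is split into the cells \<open>K\<close> whose entry is not
  \<open>{d + 1}\<close>, the cells \<open>S \<subseteq> K\<close> that contain \<open>d + 1\<close>, and a tableau on \<open>K\<close> with entries \<open>\<le> d\<close>.
  The cells of \<open>D - K\<close> form a horizontal strip at the ends of the rows, and \<open>S\<close> lies among the
  last cells of the rows of \<open>K\<close> that have nothing of \<open>D\<close> below them.\<close>

definition is_outer_strip :: "(nat \<times> nat) set \<Rightarrow> (nat \<times> nat) set \<Rightarrow> bool" where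
  "is_outer_strip D K \<longleftrightarrow> K \<subseteq> D \<and> (\<forall>i j. (i, j) \<in> D - K \<longrightarrow> (i, j + 1) \<notin> K)
      \<and> (\<forall>i j. (i, j) \<in> D - K \<longrightarrow> (i + 1, j) \<notin> D)"

definition free_corners :: "(nat \<times> nat) set \<Rightarrow> (nat \<times> nat) set \<Rightarrow> (nat \<times> nat) set" where
  "free_corners D K = {(i, j). (i, j) \<in> K \<and> (i, j + 1) \<notin> K \<and> (i + 1, j) \<notin> D}"

definition adjoin_entry :: "nat \<Rightarrow> (nat \<times> nat) set \<Rightarrow> (nat \<times> nat) set \<Rightarrow> (nat \<times> nat) set \<Rightarrow>
    (nat \<times> nat \<Rightarrow> nat set) \<Rightarrow> (nat \<times> nat \<Rightarrow> nat set)" where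
  "adjoin_entry d D K S T' = (\<lambda>u. if u \<in> K then (if u \<in> S then insert d (T' u) else T' u)
       else if u \<in> D then {d} else {})"

definition lower_cells :: "nat \<Rightarrow> (nat \<times> nat) set \<Rightarrow> (nat \<times> nat \<Rightarrow> nat set) \<Rightarrow> (nat \<times> nat) set" where
  "lower_cells d D T = {u \<in> D. T u \<noteq> {d}}"

definition marked_cells :: "nat \<Rightarrow> (nat \<times> nat) set \<Rightarrow> (nat \<times> nat \<Rightarrow> nat set) \<Rightarrow> (nat \<times> nat) set" where
  "marked_cells d D T = {u \<in> D. T u \<noteq> {d} \<and> d \<in> T u}"

definition remove_entry ::
  "nat \<Rightarrow> (nat \<times> nat) set \<Rightarrow> (nat \<times> nat \<Rightarrow> nat set) \<Rightarrow> (nat \<times> nat \<Rightarrow> nat set)" where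
  "remove_entry d D T = (\<lambda>u. if u \<in> D \<and> T u \<noteq> {d} then T u - {d} else {})"

lemma Min_adjoin_entry:
  assumes "T' \<in> ssvt_on e K" "u \<in> K"
  shows "Min (adjoin_entry (Suc e) D K S T' u) = Min (T' u)"
proof -
  have "Min (insert (Suc e) (T' u)) = min (Suc e) (Min (T' u))"
    using ssvt_onD(2,4)[OF assms(1)] assms(2) by (simp add: Min_insert)
  thus ?thesis using ssvt_on_Min_le[OF assms] assms(2) by (simp add: adjoin_entry_def)
qed

lemma adjoin_entry_in_ssvt_on:
  assumes K: "is_outer_strip D K" and S: "S \<subseteq> free_corners D K" and T': "T' \<in> ssvt_on e K"
  shows "adjoin_entry (Suc e) D K S T' \<in> ssvt_on (Suc e) D"
  unfolding ssvt_on_def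
proof (intro CollectI conjI allI impI ballI)
  let ?T = "adjoin_entry (Suc e) D K S T'"
  note P = ssvt_onD[OF T']
  have KD: "K \<subseteq> D" using K by (simp add: is_outer_strip_def)
  fix u
  show "u \<notin> D \<Longrightarrow> ?T u = {}" using KD by (auto simp: adjoin_entry_def)
  assume "u \<in> D"
  then show "?T u \<noteq> {}" "?T u \<subseteq> {1..Suc e}"
    using P(2,3)[of u] by (auto simp: adjoin_entry_def subset_iff) (use le_SucI in blast)
next
  let ?T = "adjoin_entry (Suc e) D K S T'"
  note P = ssvt_onD[OF T']
  fix i j assume a: "(i, j) \<in> D \<and> (i, j + 1) \<in> D"
  show "Max (?T (i, j)) \<le> Min (?T (i, j + 1))"
  proof (cases "(i, j) \<in> K")
    case True
    show ?thesis
    proof (cases "(i, j + 1) \<in> K")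
      case True2: True
      with True S have "?T (i, j) = T' (i, j)" by (auto simp: adjoin_entry_def free_corners_def)
      thus ?thesis using Min_adjoin_entry[OF T' True2] P(5)[OF True True2] by simp
    next
      case False
      have "Max (?T (i, j)) \<le> Suc e"
        using P(2,4)[of "(i, j)"] ssvt_on_Max_le[OF T' True] True by (auto simp: adjoin_entry_def)
      thus ?thesis using False a by (simp add: adjoin_entry_def)
    qed
  next
    case False
    hence "(i, j + 1) \<notin> K" using K a by (simp add: is_outer_strip_def)
    thus ?thesis using False a by (simp add: adjoin_entry_def)
  qed
next
  let ?T = "adjoin_entry (Suc e) D K S T'"
  note P = ssvt_onD[OF T']
  fix i j assume a: "(i, j) \<in> D \<and> (i + 1, j) \<in> D"
  have iK: "(i, j) \<in> K" using K a by (auto simp: is_outer_strip_def)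
  moreover have "(i, j) \<notin> S" using S a by (auto simp: free_corners_def)
  ultimately have Tij: "?T (i, j) = T' (i, j)" by (simp add: adjoin_entry_def)
  show "Max (?T (i, j)) < Min (?T (i + 1, j))"
  proof (cases "(i + 1, j) \<in> K")
    case True
    thus ?thesis using Tij Min_adjoin_entry[OF T' True] P(6) iK by simp
  next
    case False
    thus ?thesis using Tij ssvt_on_Max_le[OF T' iK] a by (simp add: adjoin_entry_def)
  qed
qed

lemma eq_singleton_if_Max_le_Min:
  fixes A B :: "nat set"
  assumes "finite A" "B \<subseteq> {1..d}" "finite B" "B \<noteq> {}" "Max A \<le> Min B" "d \<in> A"
  shows "B = {d}"
proof -
  have "\<forall>b\<in>B. d \<le> b" using assms by (meson Max_ge Min_le order_trans)
  thus ?thesis using assms(2,4) by fastforce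
qed

lemma Max_Min_Diff_singleton:
  fixes A :: "'a::linorder set"
  assumes "finite A" "A - {a} \<noteq> {}"
  shows "Max (A - {a}) \<le> Max A" "Min A \<le> Min (A - {a})"
  using assms by (auto intro: Max_mono Min_antimono)

lemma decompose_tableau:
  assumes T: "T \<in> ssvt_on (Suc e) D"
  defines "K \<equiv> lower_cells (Suc e) D T"
  shows "is_outer_strip D K" "marked_cells (Suc e) D T \<subseteq> free_corners D K"
    "remove_entry (Suc e) D T \<in> ssvt_on e K"
proof -
  let ?d = "Suc e" and ?T' = "remove_entry (Suc e) D T"
  note P = ssvt_onD[OF T]
  have right: "T (i, j + 1) = {?d}" if "(i, j) \<in> D" "(i, j + 1) \<in> D" "?d \<in> T (i, j)" for i j
    using P that by (intro eq_singleton_if_Max_le_Min[of "T (i, j)"]) auto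
  have below: "?d \<notin> T (i, j)" if "(i, j) \<in> D" "(i + 1, j) \<in> D" for i j
  proof
    assume "?d \<in> T (i, j)"
    hence "?d \<le> Max (T (i, j))" using P(4) by simp
    also have "\<dots> < Min (T (i + 1, j))" using P(6) that by blast
    also have "\<dots> \<le> ?d" using ssvt_on_Min_le[OF T that(2)] .
    finally show False by simp
  qed
  show "is_outer_strip D K"
    unfolding is_outer_strip_def K_def lower_cells_def using right below by (auto, metis insertI1)
  show "marked_cells ?d D T \<subseteq> free_corners D K"
    unfolding marked_cells_def free_corners_def K_def lower_cells_def using right below by auto
  have K: "u \<in> K \<longleftrightarrow> u \<in> D \<and> T u \<noteq> {?d}" for u by (simp add: K_def lower_cells_def)
  have T': "?T' u = T u - {?d}" if "u \<in> K" for u using that K by (simp add: remove_entry_def)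
  have Max_Min: "Max (?T' u) \<le> Max (T u)" "Min (T u) \<le> Min (?T' u)" if "u \<in> K" for u
    using Max_Min_Diff_singleton[OF P(4), of u ?d] P(2)[of u] that K T' by auto
  show "?T' \<in> ssvt_on e K"
    unfolding ssvt_on_def
  proof (intro CollectI conjI allI impI ballI)
    fix u
    show "u \<notin> K \<Longrightarrow> ?T' u = {}" using K by (auto simp: remove_entry_def)
    assume "u \<in> K"
    then show "?T' u \<noteq> {}" "?T' u \<subseteq> {1..e}" using K P(2,3)[of u] T' by auto
  next
    fix i j assume "(i, j) \<in> K \<and> (i, j + 1) \<in> K"
    thus "Max (?T' (i, j)) \<le> Min (?T' (i, j + 1))"
      using Max_Min P(5)[of i j] K by (meson order_trans)
  next
    fix i j assume "(i, j) \<in> K \<and> (i + 1, j) \<in> K"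
    thus "Max (?T' (i, j)) < Min (?T' (i + 1, j))"
      using Max_Min P(6)[of i j] K by (meson order_le_less_trans order_less_le_trans)
  qed
qed

lemma adjoin_remove_entry:
  assumes T: "T \<in> ssvt_on (Suc e) D"
  shows "adjoin_entry (Suc e) D (lower_cells (Suc e) D T) (marked_cells (Suc e) D T)
      (remove_entry (Suc e) D T) = T"
  using ssvt_onD(1)[OF T]
  by (auto simp: fun_eq_iff adjoin_entry_def lower_cells_def marked_cells_def remove_entry_def)

lemma remove_adjoin_entry:
  assumes K: "is_outer_strip D K" and S: "S \<subseteq> free_corners D K" and T': "T' \<in> ssvt_on e K"
  shows "lower_cells (Suc e) D (adjoin_entry (Suc e) D K S T') = K"
    "marked_cells (Suc e) D (adjoin_entry (Suc e) D K S T') = S"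
    "remove_entry (Suc e) D (adjoin_entry (Suc e) D K S T') = T'"
proof -
  have KD: "K \<subseteq> D" using K by (simp add: is_outer_strip_def)
  have SK: "S \<subseteq> K" using S by (auto simp: free_corners_def)
  have d_notin: "\<And>u. Suc e \<notin> T' u" using Suc_notin_ssvt_on[OF T'] .
  have neq: "\<And>u. u \<in> K \<Longrightarrow> T' u \<noteq> {Suc e} \<and> insert (Suc e) (T' u) \<noteq> {Suc e}"
    using d_notin ssvt_onD(2)[OF T'] by blast
  show "lower_cells (Suc e) D (adjoin_entry (Suc e) D K S T') = K"
    using KD neq by (auto simp: lower_cells_def adjoin_entry_def)
  show "marked_cells (Suc e) D (adjoin_entry (Suc e) D K S T') = S"
    using KD SK neq d_notin by (auto simp: marked_cells_def adjoin_entry_def)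
  show "remove_entry (Suc e) D (adjoin_entry (Suc e) D K S T') = T'"
    using KD SK neq d_notin ssvt_onD(1)[OF T']
    by (auto simp: fun_eq_iff remove_entry_def adjoin_entry_def)
qed

lemma excess_adjoin_entry:
  assumes D: "finite D" and K: "is_outer_strip D K" and S: "S \<subseteq> free_corners D K"
    and T': "T' \<in> ssvt_on e K"
  defines "T \<equiv> adjoin_entry (Suc e) D K S T'"
  shows "(\<Sum>u\<in>D. card (T u)) - card D = ((\<Sum>u\<in>K. card (T' u)) - card K) + card S"
proof -
  note P = ssvt_onD[OF T']
  have KD: "K \<subseteq> D" using K by (simp add: is_outer_strip_def)
  have SK: "S \<subseteq> K" using S by (auto simp: free_corners_def)
  have fK: "finite K" using KD D finite_subset by blast
  have "(\<Sum>u\<in>D. card (T u)) = (\<Sum>u\<in>D - K. card (T u)) + (\<Sum>u\<in>K. card (T u))"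
    using sum.subset_diff[OF KD D] by simp
  also have "(\<Sum>u\<in>D - K. card (T u)) = card (D - K)" by (simp add: T_def adjoin_entry_def)
  also have "(\<Sum>u\<in>K. card (T u)) = (\<Sum>u\<in>K. card (T' u) + (if u \<in> S then 1 else 0))"
    using P(4) Suc_notin_ssvt_on[OF T'] by (intro sum.cong) (auto simp: T_def adjoin_entry_def)
  also have "\<dots> = (\<Sum>u\<in>K. card (T' u)) + card S"
    using fK SK by (simp add: sum.distrib sum.If_cases Int_absorb1)
  finally have "(\<Sum>u\<in>D. card (T u)) = (\<Sum>u\<in>K. card (T' u)) + card S + card (D - K)" by simp
  moreover have "card D = card K + card (D - K)"
    using KD fK D by (metis card_Diff_subset card_mono le_add_diff_inverse)
  moreover have "card K \<le> (\<Sum>u\<in>K. card (T' u))"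
    using sum_mono[of K "\<lambda>_. 1::nat" "\<lambda>u. card (T' u)"] P(2,4)
      by (simp add: Suc_le_eq card_gt_0_iff)
  ultimately show ?thesis by simp
qed

lemma prod_adjoin_entry:
  fixes h :: "nat \<Rightarrow> nat \<times> nat \<Rightarrow> 'a::comm_monoid_mult"
  assumes D: "finite D" and K: "is_outer_strip D K" and S: "S \<subseteq> free_corners D K"
    and T': "T' \<in> ssvt_on e K"
  defines "T \<equiv> adjoin_entry (Suc e) D K S T'"
  shows "(\<Prod>u\<in>D. \<Prod>r\<in>T u. h r u) =
    (\<Prod>u\<in>K. \<Prod>r\<in>T' u. h r u) * (\<Prod>u\<in>S. h (Suc e) u) * (\<Prod>u\<in>D - K. h (Suc e) u)"
proof -
  have KD: "K \<subseteq> D" using K by (simp add: is_outer_strip_def)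
  have SK: "S \<subseteq> K" using S by (auto simp: free_corners_def)
  have fK: "finite K" using KD D finite_subset by blast
  have "(\<Prod>u\<in>D. \<Prod>r\<in>T u. h r u) = (\<Prod>u\<in>D - K. \<Prod>r\<in>T u. h r u) * (\<Prod>u\<in>K. \<Prod>r\<in>T u. h r u)"
    using prod.subset_diff[OF KD D] by simp
  also have "(\<Prod>u\<in>D - K. \<Prod>r\<in>T u. h r u) = (\<Prod>u\<in>D - K. h (Suc e) u)"
    by (simp add: T_def adjoin_entry_def)
  also have "(\<Prod>u\<in>K. \<Prod>r\<in>T u. h r u) = (\<Prod>u\<in>K. (if u \<in> S then h (Suc e) u else 1) * (\<Prod>r\<in>T' u. h r u))"
    using ssvt_onD(4)[OF T'] Suc_notin_ssvt_on[OF T']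
    by (intro prod.cong) (auto simp: T_def adjoin_entry_def)
  also have "\<dots> = (\<Prod>u\<in>S. h (Suc e) u) * (\<Prod>u\<in>K. \<Prod>r\<in>T' u. h r u)"
    using prod.inter_restrict[OF fK, of "h (Suc e)" S] SK by (simp add: prod.distrib Int_absorb1)
  finally show ?thesis by (simp add: ac_simps)
qed

lemma tableau_weight_adjoin_entry:
  assumes "finite D" "is_outer_strip D K" "S \<subseteq> free_corners D K" "T' \<in> ssvt_on e K"
  shows "tableau_weight \<beta> x y D (adjoin_entry (Suc e) D K S T') =
     tableau_weight \<beta> x y K T' * (\<beta> ^ card S * (\<Prod>u\<in>S. cell_factor \<beta> x y (Suc e) u)) *
     (\<Prod>u\<in>D - K. cell_factor \<beta> x y (Suc e) u)"
  unfolding tableau_weight_def excess_adjoin_entry[OF assms] prod_adjoin_entry[OF assms]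
  by (simp add: power_add ac_simps)

lemma sum_Pow_power_card_prod:
  fixes f :: "'b \<Rightarrow> 'a::comm_semiring_1"
  assumes "finite A"
  shows "(\<Sum>S\<in>Pow A. \<beta> ^ card S * (\<Prod>u\<in>S. f u)) = (\<Prod>u\<in>A. 1 + \<beta> * f u)"
proof -
  have "(\<Prod>u\<in>A. \<beta> * f u + 1) = (\<Sum>X\<in>Pow A. (\<Prod>u\<in>X. \<beta> * f u) * (\<Prod>u\<in>A - X. 1))"
    by (rule prod_add[OF assms])
  also have "\<dots> = (\<Sum>S\<in>Pow A. \<beta> ^ card S * (\<Prod>u\<in>S. f u))"
    by (intro sum.cong) (simp_all add: prod.distrib)
  finally show ?thesis by (simp add: add.commute)
qed

lemma bij_betw_adjoin_entry:
  "bij_betw (\<lambda>(K, S, T'). adjoin_entry (Suc e) D K S T')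
     (SIGMA K:{K\<in>Pow D. is_outer_strip D K}. Pow (free_corners D K) \<times> ssvt_on e K)
     (ssvt_on (Suc e) D)"
proof (rule bij_betw_byWitness[where f' = "\<lambda>T. (lower_cells (Suc e) D T, marked_cells (Suc e) D T,
    remove_entry (Suc e) D T)"])
  show "(\<lambda>(K, S, T'). adjoin_entry (Suc e) D K S T') `
      (SIGMA K:{K\<in>Pow D. is_outer_strip D K}. Pow (free_corners D K) \<times> ssvt_on e K)
    \<subseteq> ssvt_on (Suc e) D"
    using adjoin_entry_in_ssvt_on by auto
  show "(\<lambda>T. (lower_cells (Suc e) D T, marked_cells (Suc e) D T, remove_entry (Suc e) D T)) `
      ssvt_on (Suc e) D
    \<subseteq> (SIGMA K:{K\<in>Pow D. is_outer_strip D K}. Pow (free_corners D K) \<times> ssvt_on e K)"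
  proof (rule image_subsetI)
    fix T assume "T \<in> ssvt_on (Suc e) D"
    note dec = decompose_tableau[OF this]
    have "lower_cells (Suc e) D T \<in> {K\<in>Pow D. is_outer_strip D K}"
      using dec(1) by (auto simp: is_outer_strip_def)
    thus "(lower_cells (Suc e) D T, marked_cells (Suc e) D T, remove_entry (Suc e) D T)
      \<in> (SIGMA K:{K\<in>Pow D. is_outer_strip D K}. Pow (free_corners D K) \<times> ssvt_on e K)"
      using dec(2,3) by blast
  qed
qed (use remove_adjoin_entry adjoin_remove_entry in auto)

lemma G_on_Suc_branching:
  assumes D: "finite D"
  shows "G_on \<beta> (Suc e) D x y = (\<Sum>K\<in>{K\<in>Pow D. is_outer_strip D K}. G_on \<beta> e K x y *
      (\<Prod>u\<in>free_corners D K. 1 + \<beta> * cell_factor \<beta> x y (Suc e) u) *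
      (\<Prod>u\<in>D - K. cell_factor \<beta> x y (Suc e) u))"
proof -
  let ?V = "{K\<in>Pow D. is_outer_strip D K}" and ?h = "cell_factor \<beta> x y (Suc e)"
  have fin: "finite K" "finite (free_corners D K)" if "K \<in> ?V" for K
    using that D by (auto intro: finite_subset simp: free_corners_def)
  let ?Sig = "SIGMA K:?V. Pow (free_corners D K) \<times> ssvt_on e K"
  have "G_on \<beta> (Suc e) D x y =
      (\<Sum>(K, S, T')\<in>?Sig. tableau_weight \<beta> x y D (adjoin_entry (Suc e) D K S T'))"
    using sum.reindex_bij_betw[OF bij_betw_adjoin_entry, of "tableau_weight \<beta> x y D"]
    by (simp add: G_on_def split_def)
  also have "\<dots> = (\<Sum>K\<in>?V. \<Sum>S\<in>Pow (free_corners D K). \<Sum>T'\<in>ssvt_on e K.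
      tableau_weight \<beta> x y D (adjoin_entry (Suc e) D K S T'))"
    using D fin finite_ssvt_on by (simp add: sum.Sigma[symmetric] sum.cartesian_product[symmetric])
  also have "\<dots> = (\<Sum>K\<in>?V. \<Sum>S\<in>Pow (free_corners D K). \<Sum>T'\<in>ssvt_on e K.
      tableau_weight \<beta> x y K T' * (\<beta> ^ card S * (\<Prod>u\<in>S. ?h u)) * (\<Prod>u\<in>D - K. ?h u))"
    using tableau_weight_adjoin_entry[OF D] by (intro sum.cong refl) auto
  also have "\<dots> = (\<Sum>K\<in>?V. G_on \<beta> e K x y * (\<Sum>S\<in>Pow (free_corners D K). \<beta> ^ card S * (\<Prod>u\<in>S. ?h u)) *
      (\<Prod>u\<in>D - K. ?h u))"
    unfolding G_on_def by (simp add: sum_distrib_left sum_distrib_right ac_simps)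
  also have "\<dots> = (\<Sum>K\<in>?V. G_on \<beta> e K x y * (\<Prod>u\<in>free_corners D K. 1 + \<beta> * ?h u) * (\<Prod>u\<in>D - K. ?h u))"
    using fin by (intro sum.cong refl) (simp add: sum_Pow_power_card_prod)
  finally show ?thesis .
qed

section \<open>Partitions as functions and the branching rule\<close>

text \<open>A partition is encoded by its sequence of parts \<open>i \<mapsto> \<lambda>\<^sub>i\<close> (\<open>i \<ge> 1\<close>), with the junk value \<open>0\<close>
  at index \<open>0\<close>.\<close>

definition is_partition_fun :: "(nat \<Rightarrow> nat) \<Rightarrow> bool" where
  "is_partition_fun m \<longleftrightarrow>
     m 0 = 0 \<and> (\<forall>i j. 1 \<le> i \<longrightarrow> i \<le> j \<longrightarrow> m j \<le> m i) \<and> (\<exists>L. \<forall>i>L. m i = 0)"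

definition diagram :: "(nat \<Rightarrow> nat) \<Rightarrow> (nat \<times> nat) set" where
  "diagram m = {(i, j). 1 \<le> i \<and> 1 \<le> j \<and> j \<le> m i}"

definition interlaces :: "(nat \<Rightarrow> nat) \<Rightarrow> (nat \<Rightarrow> nat) \<Rightarrow> bool" where
  "interlaces m k \<longleftrightarrow> k 0 = 0 \<and> (\<forall>i\<ge>1. m (Suc i) \<le> k i \<and> k i \<le> m i)"

lemma is_partition_fun_0: "is_partition_fun m \<Longrightarrow> m 0 = 0"
  by (simp add: is_partition_fun_def)

lemma is_partition_fun_mono: "is_partition_fun m \<Longrightarrow> 1 \<le> i \<Longrightarrow> i \<le> j \<Longrightarrow> m j \<le> m i"
  unfolding is_partition_fun_def by blast

lemma is_partition_fun_support: "is_partition_fun m \<Longrightarrow> \<exists>L. \<forall>i>L. m i = 0"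
  by (simp add: is_partition_fun_def)

lemma interlacesD:
  assumes "interlaces n r"
  shows "r 0 = 0" "\<And>i. 1 \<le> i \<Longrightarrow> n (Suc i) \<le> r i" "\<And>i. 1 \<le> i \<Longrightarrow> r i \<le> n i"
  using assms unfolding interlaces_def by blast+

lemma interlaces_le: "interlaces m k \<Longrightarrow> k i \<le> m i"
  by (cases "i = 0") (auto simp: interlaces_def)

lemma is_partition_fun_interlaces:
  assumes il: "interlaces n r" and L: "\<forall>i>L. n i = 0"
  shows "is_partition_fun r"
  unfolding is_partition_fun_def
proof (intro conjI allI impI)
  note F = interlacesD[OF il]
  show "r 0 = 0" by (rule F(1))
  show "\<exists>L. \<forall>i>L. r i = 0"
  proof (intro exI allI impI)
    fix i assume i: "i > L"
    have "r i \<le> n i" using F(3)[of i] i by simp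
    thus "r i = 0" using L i by simp
  qed
  fix i j :: nat assume ij: "1 \<le> i" "i \<le> j"
  from ij(2) show "r j \<le> r i"
  proof (induction j rule: dec_induct)
    case base thus ?case by simp
  next
    case (step j)
    have j1: "1 \<le> j" using step ij by simp
    have "r (Suc j) \<le> n (Suc j)" using F(3)[of "Suc j"] by simp
    also have "n (Suc j) \<le> r j" using F(2)[OF j1] .
    finally show ?case using step by simp
  qed
qed

lemma finite_pointwise_le_funs:
  assumes "\<forall>i>L. b i = 0"
  shows "finite {k::nat\<Rightarrow>nat. \<forall>i. k i \<le> b i}"
proof -
  let ?F = "{k. \<forall>i. (i \<in> {..L} \<longrightarrow> k i \<in> {0..Max (b ` {..L})}) \<and> (i \<notin> {..L} \<longrightarrow> k i = 0)}"
  have "{k::nat\<Rightarrow>nat. \<forall>i. k i \<le> b i} \<subseteq> ?F"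
  proof (rule subsetI, unfold mem_Collect_eq, intro allI conjI impI)
    fix k :: "nat \<Rightarrow> nat" and i assume k: "\<forall>i. k i \<le> b i"
    show "k i \<in> {0..Max (b ` {..L})}" if "i \<in> {..L}"
    proof -
      have "b i \<le> Max (b ` {..L})" using that by simp
      thus ?thesis using k[rule_format, of i] by simp
    qed
    show "k i = 0" if "i \<notin> {..L}" using k[rule_format, of i] assms that by simp
  qed
  moreover have "finite ?F" by (rule finite_set_of_finite_funs) auto
  ultimately show ?thesis by (rule finite_subset)
qed

lemma finite_diagram:
  assumes "\<forall>i>L. m i = 0" shows "finite (diagram m)"
proof -
  have "diagram m \<subseteq> {1..L} \<times> {1..Max (m ` {..L})}"
  proof
    fix u assume "u \<in> diagram m"
    then obtain i j where u: "u = (i, j)" "1 \<le> i" "1 \<le> j" "j \<le> m i" by (auto simp: diagram_def)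
    have iL: "i \<le> L" using u assms by (metis le_zero_eq not_le not_one_le_zero)
    hence "m i \<le> Max (m ` {..L})" by simp
    hence "j \<le> Max (m ` {..L})" using u(4) by linarith
    thus "u \<in> {1..L} \<times> {1..Max (m ` {..L})}" using u iL by auto
  qed
  thus ?thesis by (rule finite_subset) simp
qed

lemma finite_interlaces:
  assumes "\<forall>i>L. m i = 0" shows "finite {k. interlaces m k}"
  by (rule rev_finite_subset[OF finite_pointwise_le_funs[OF assms]]) (auto intro: interlaces_le)

lemma diagram_row: "1 \<le> i \<Longrightarrow> {j. (i, j) \<in> diagram k} = {1..k i}"
  by (auto simp: diagram_def)

lemma diagram_inj:
  assumes "k1 0 = 0" "k2 0 = 0" "diagram k1 = diagram k2" shows "k1 = k2"
proof
  fix i show "k1 i = k2 i"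
  proof (cases "i = 0")
    case False
    hence "k i = card {j. (i, j) \<in> diagram k}" for k using diagram_row[of i k] by simp
    thus ?thesis using assms(3) by metis
  qed (use assms in simp)
qed

lemma eq_atLeastAtMost_card:
  fixes J :: "nat set"
  assumes "finite J" "0 \<notin> J" "\<And>j j'. j \<in> J \<Longrightarrow> 1 \<le> j' \<Longrightarrow> j' \<le> j \<Longrightarrow> j' \<in> J"
  shows "J = {1..card J}"
proof (cases "J = {}")
  case False
  have "J = {1..Max J}"
  proof
    show "J \<subseteq> {1..Max J}" using assms(1,2) by (auto simp: Suc_le_eq intro!: Max_ge) (metis gr0I)
    show "{1..Max J} \<subseteq> J" using assms(3)[of "Max J"] Max_in[OF assms(1) False] by auto
  qed
  moreover hence "card J = Max J" by (metis card_atLeastAtMost diff_Suc_1)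
  ultimately show ?thesis by simp
qed simp

lemma outer_strip_row:
  assumes K: "is_outer_strip (diagram m) K"
  shows "{j. (i, j) \<in> K} = {1..card {j. (i, j) \<in> K}}"
proof (rule eq_atLeastAtMost_card)
  have KD: "K \<subseteq> diagram m" using K by (simp add: is_outer_strip_def)
  have "{j. (i, j) \<in> K} \<subseteq> {1..m i}" using KD by (auto simp: diagram_def)
  thus "finite {j. (i, j) \<in> K}" by (rule finite_subset) simp
  show "0 \<notin> {j. (i, j) \<in> K}" using KD by (auto simp: diagram_def)
  have gap: "(i, j + t) \<notin> K" if "(i, j) \<notin> K" "1 \<le> j" for j t
  proof (induction t)
    case (Suc t)
    show ?case
    proof (cases "(i, j + t) \<in> diagram m")
      case True thus ?thesis using K Suc by (simp add: is_outer_strip_def)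
    next
      case False
      hence "(i, j + Suc t) \<notin> diagram m" using that by (auto simp: diagram_def)
      thus ?thesis using KD by auto
    qed
  qed (use that in simp)
  fix j j' assume "j \<in> {j. (i, j) \<in> K}" "1 \<le> j'" "j' \<le> j"
  thus "j' \<in> {j. (i, j) \<in> K}" using gap[of j' "j - j'"] by auto
qed

lemma outer_strip_diagram:
  assumes m: "is_partition_fun m" and K: "is_outer_strip (diagram m) K"
  defines "k \<equiv> \<lambda>i. if i = 0 then 0 else card {j. (i, j) \<in> K}"
  shows "K = diagram k" "interlaces m k"
proof -
  have KD: "K \<subseteq> diagram m" using K by (simp add: is_outer_strip_def)
  have row: "{j. (i, j) \<in> K} = {1..k i}" if "1 \<le> i" for i
    using outer_strip_row[OF K, of i] that by (simp add: k_def)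
  show "K = diagram k"
  proof (rule set_eqI)
    fix u :: "nat \<times> nat"
    obtain i j where u: "u = (i, j)" by fastforce
    show "u \<in> K \<longleftrightarrow> u \<in> diagram k"
    proof (cases "1 \<le> i")
      case True
      have "(i, j) \<in> K \<longleftrightarrow> j \<in> {j. (i, j) \<in> K}" by simp
      also have "\<dots> \<longleftrightarrow> (i, j) \<in> diagram k" unfolding row[OF True]
        using True by (simp add: diagram_def)
      finally show ?thesis using u by simp
    qed (use KD u in \<open>auto simp: diagram_def\<close>)
  qed
  show "interlaces m k"
    unfolding interlaces_def
  proof (intro conjI allI impI)
    fix i :: nat assume i: "1 \<le> i"
    show "k i \<le> m i"
    proof (cases "k i = 0")
      case False
      hence "k i \<in> {j. (i, j) \<in> K}" unfolding row[OF i] by simp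
      hence "(i, k i) \<in> K" by simp
      thus ?thesis using KD by (auto simp: diagram_def)
    qed simp
    show "m (Suc i) \<le> k i"
    proof (cases "m (Suc i) = 0")
      case False
      have "(Suc i, m (Suc i)) \<in> diagram m" "(i, m (Suc i)) \<in> diagram m"
        using False is_partition_fun_mono[OF m i, of "Suc i"] i by (auto simp: diagram_def)
      hence "(i, m (Suc i)) \<in> K" using K by (auto simp: is_outer_strip_def)
      thus ?thesis using row[OF i] by auto
    qed simp
  qed (simp add: k_def)
qed

lemma interlaces_outer_strip:
  assumes "interlaces m k" shows "is_outer_strip (diagram m) (diagram k)"
  using assms unfolding interlaces_def is_outer_strip_def diagram_def
  by (auto simp: not_le)

lemma bij_betw_diagram_interlaces:
  assumes m: "is_partition_fun m"
  shows "bij_betw diagram {k. interlaces m k} {K\<in>Pow (diagram m). is_outer_strip (diagram m) K}"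
proof (rule bij_betw_imageI)
  show "inj_on diagram {k. interlaces m k}"
    by (rule inj_onI) (auto simp: interlaces_def intro: diagram_inj)
  show "diagram ` {k. interlaces m k} = {K \<in> Pow (diagram m). is_outer_strip (diagram m) K}"
  proof
    show "diagram ` {k. interlaces m k} \<subseteq> {K \<in> Pow (diagram m). is_outer_strip (diagram m) K}"
      using interlaces_outer_strip unfolding is_outer_strip_def by blast
    show "{K \<in> Pow (diagram m). is_outer_strip (diagram m) K} \<subseteq> diagram ` {k. interlaces m k}"
      using outer_strip_diagram[OF m] by blast
  qed
qed

lemma row_le_bound:
  assumes "interlaces m k" "\<forall>i>d. m i = 0" "1 \<le> j" "j \<le> k i \<or> j \<le> m i"
  shows "i \<le> d"
proof (rule ccontr)
  assume "\<not> i \<le> d"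
  hence "m i = 0" using assms(2) by simp
  thus False using assms(3,4) interlaces_le[OF assms(1), of i] by simp
qed

lemma free_corners_diagram:
  assumes k: "interlaces m k" and md: "\<forall>i>d. m i = 0"
  shows "free_corners (diagram m) (diagram k) = (\<lambda>i. (i, k i)) ` {i\<in>{1..d}. m (Suc i) < k i}"
proof (rule set_eqI, rule iffI)
  fix u assume "u \<in> free_corners (diagram m) (diagram k)"
  then obtain i j where ij: "u = (i, j)" "1 \<le> i" "1 \<le> j" "j = k i" "m (Suc i) < j"
    by (auto simp: free_corners_def diagram_def)
  moreover have "i \<le> d" using row_le_bound[OF k md, of j i] ij by simp
  ultimately show "u \<in> (\<lambda>i. (i, k i)) ` {i\<in>{1..d}. m (Suc i) < k i}" by auto
qed (auto simp: free_corners_def diagram_def)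

lemma diagram_diff_interlaces:
  assumes k: "interlaces m k" and md: "\<forall>i>d. m i = 0"
  shows "diagram m - diagram k = (SIGMA i:{1..d}. {k i<..m i})"
proof (rule set_eqI, rule iffI)
  fix u assume u: "u \<in> diagram m - diagram k"
  obtain i j where "u = (i, j)" by fastforce
  with u have ij: "u = (i, j)" "1 \<le> i" "1 \<le> j" "j \<le> m i" "k i < j"
    by (auto simp: diagram_def)
  moreover have "i \<le> d" using row_le_bound[OF k md, of j i] ij by simp
  ultimately show "u \<in> (SIGMA i:{1..d}. {k i<..m i})" by auto
qed (auto simp: diagram_def)

definition row_weight :: "'a::field \<Rightarrow> (nat \<Rightarrow> 'a) \<Rightarrow> (nat \<Rightarrow> 'a) \<Rightarrow> nat \<Rightarrow> nat \<Rightarrow> nat \<Rightarrow> nat \<Rightarrow> nat \<Rightarrow> 'a"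
  where
  "row_weight \<beta> x y r i n k n' = (\<Prod>a\<in>{k<..n}. cell_factor \<beta> x y r (i, a)) *
     (if n' < k then 1 + \<beta> * cell_factor \<beta> x y r (i, k) else 1)"

lemma G_on_diagram_branching:
  assumes m: "is_partition_fun m" and md: "\<forall>i>Suc e. m i = 0"
  shows "G_on \<beta> (Suc e) (diagram m) x y = (\<Sum>k\<in>{k. interlaces m k}. G_on \<beta> e (diagram k) x y *
     (\<Prod>i\<in>{1..Suc e}. row_weight \<beta> x y (Suc e) i (m i) (k i) (m (Suc i))))"
proof -
  let ?h = "cell_factor \<beta> x y (Suc e)"
  have "G_on \<beta> (Suc e) (diagram m) x y = (\<Sum>k\<in>{k. interlaces m k}. G_on \<beta> e (diagram k) x y *
      (\<Prod>u\<in>free_corners (diagram m) (diagram k). 1 + \<beta> * ?h u) * (\<Prod>u\<in>diagram m - diagram k. ?h u))"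
    unfolding G_on_Suc_branching[OF finite_diagram[OF md]]
    by (rule sum.reindex_bij_betw[OF bij_betw_diagram_interlaces[OF m], symmetric, where g = "\<lambda>K.
      G_on \<beta> e K x y * (\<Prod>u\<in>free_corners (diagram m) K. 1 + \<beta> * ?h u) * (\<Prod>u\<in>diagram m - K. ?h u)"])
  also have "\<dots> = (\<Sum>k\<in>{k. interlaces m k}. G_on \<beta> e (diagram k) x y *
      (\<Prod>i\<in>{1..Suc e}. row_weight \<beta> x y (Suc e) i (m i) (k i) (m (Suc i))))"
  proof (intro sum.cong refl)
    fix k assume "k \<in> {k. interlaces m k}"
    hence k: "interlaces m k" by simp
    have "(\<Prod>u\<in>free_corners (diagram m) (diagram k). 1 + \<beta> * ?h u) =
        (\<Prod>i\<in>{i\<in>{1..Suc e}. m (Suc i) < k i}. 1 + \<beta> * ?h (i, k i))"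
      unfolding free_corners_diagram[OF k md] by (subst prod.reindex) (auto simp: inj_on_def)
    also have "\<dots> = (\<Prod>i\<in>{1..Suc e}. if m (Suc i) < k i then 1 + \<beta> * ?h (i, k i) else 1)"
      by (rule prod.inter_filter) simp
    finally have corners: "(\<Prod>u\<in>free_corners (diagram m) (diagram k). 1 + \<beta> * ?h u) =
        (\<Prod>i\<in>{1..Suc e}. if m (Suc i) < k i then 1 + \<beta> * ?h (i, k i) else 1)" .
    have strip: "(\<Prod>u\<in>diagram m - diagram k. ?h u) = (\<Prod>i\<in>{1..Suc e}. \<Prod>a\<in>{k i<..m i}. ?h (i, a))"
      unfolding diagram_diff_interlaces[OF k md] by (subst prod.Sigma) auto
    show "G_on \<beta> e (diagram k) x y * (\<Prod>u\<in>free_corners (diagram m) (diagram k). 1 + \<beta> * ?h u) *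
        (\<Prod>u\<in>diagram m - diagram k. ?h u) =
      G_on \<beta> e (diagram k) x y * (\<Prod>i\<in>{1..Suc e}. row_weight \<beta> x y (Suc e) i (m i) (k i) (m (Suc i)))"
      unfolding corners strip row_weight_def by (simp add: prod.distrib ac_simps)
  qed
  finally show ?thesis .
qed

lemma ssvt_on_first_column:
  assumes T: "T \<in> ssvt_on e D" and col: "\<And>i'. 1 \<le> i' \<Longrightarrow> i' \<le> i \<Longrightarrow> (i', 1) \<in> D" and i: "1 \<le> i"
  shows "i \<le> Min (T (i, 1))"
  using i col
proof (induction i rule: dec_induct)
  case base
  thus ?case using ssvt_onD(2,3,4)[OF T, of "(1, 1)"] by (auto intro!: Min_in)
next
  case (step i)
  have c: "(i, 1) \<in> D" "(i + 1, 1) \<in> D" using step.prems step.hyps by auto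
  have "i \<le> Min (T (i, 1))" using step by simp
  also have "\<dots> \<le> Max (T (i, 1))" using ssvt_onD(2,4)[OF T, of "(i, 1)"] c by (meson Max_in Min_le)
  also have "\<dots> < Min (T (i + 1, 1))" using ssvt_onD(6)[OF T c] .
  finally show ?case by simp
qed

lemma G_on_long_column:
  assumes r: "is_partition_fun r" and i: "e < i" and ri: "r i \<noteq> 0"
  shows "G_on \<beta> e (diagram r) x y = 0"
proof -
  have col: "(i', 1) \<in> diagram r" if "1 \<le> i'" "i' \<le> i" for i'
    using is_partition_fun_mono[OF r that] ri that by (auto simp: diagram_def)
  have "ssvt_on e (diagram r) = {}"
  proof (rule ccontr)
    assume "ssvt_on e (diagram r) \<noteq> {}"
    then obtain T where T: "T \<in> ssvt_on e (diagram r)" by blast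
    have "i \<le> Min (T (i, 1))" using ssvt_on_first_column[OF T col] i by simp
    moreover have "Min (T (i, 1)) \<le> e" using ssvt_on_Min_le[OF T col] i by simp
    ultimately show False using i by simp
  qed
  thus ?thesis by (simp add: G_on_def)
qed

lemma G_on_0: "G_on \<beta> 0 D x y = (if D = {} then 1 else 0)"
proof (cases "D = {}")
  case True
  have "ssvt_on 0 D = {\<lambda>_. {}}" using True by (auto simp: ssvt_on_def)
  thus ?thesis using True by (simp add: G_on_def tableau_weight_def)
next
  case False
  have "ssvt_on 0 D = {}" using False by (auto simp: ssvt_on_def)
  thus ?thesis using False by (simp add: G_on_def)
qed

section \<open>Transfer matrices\<close>

lemma sum_Pow_insert:
  assumes "finite B" "x \<notin> B"
  shows "(\<Sum>T\<in>Pow (insert x B). f T) = (\<Sum>T\<in>Pow B. f T) + (\<Sum>T\<in>Pow B. f (insert x T))"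
proof -
  have "Pow (insert x B) = Pow B \<union> insert x ` Pow B" by (rule Pow_insert)
  moreover have "Pow B \<inter> insert x ` Pow B = {}" using assms by auto
  moreover have "inj_on (insert x) (Pow B)" using assms by (auto simp: inj_on_def)
  ultimately show ?thesis using assms by (simp add: sum.union_disjoint sum.reindex)
qed

text \<open>A sum over all subsets \<open>T\<close> of the rows \<open>j, \<dots>, j + n\<close> of a product of local weights
  \<open>M i (i \<in> T) (i + 1 \<in> T)\<close> is an entry of the product of the \<open>2 \<times> 2\<close> transfer matrices \<open>M i\<close>.
  If a vector \<open>V\<close> is an eigenvector of each step, \<open>M i (V (i + 1)) = \<sigma> i \<cdot> V i\<close>, the product
  telescopes.\<close>

lemma transfer_gauge_sum:
  fixes M :: "nat \<Rightarrow> bool \<Rightarrow> bool \<Rightarrow> 'a::comm_semiring_1"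
  assumes step: "\<And>i t. j \<le> i \<Longrightarrow> i \<le> j + n \<Longrightarrow>
      M i t False * V (Suc i) False + M i t True * V (Suc i) True = \<sigma> i * V i t"
    and last: "\<And>t. V (Suc (j + n)) t = (if t then 0 else 1)"
  shows "(\<Sum>T\<in>Pow {Suc j..j + n}. \<Prod>i\<in>{j..j + n}. M i (if i = j then t else i \<in> T) (Suc i \<in> T))
    = (\<Prod>i\<in>{j..j + n}. \<sigma> i) * V j t"
  using assms
proof (induction n arbitrary: j t)
  case 0
  thus ?case using "0.prems"(1)[of j t] by simp
next
  case (Suc n)
  let ?B = "{Suc (Suc j)..Suc j + n}"
  let ?F = "\<lambda>t' T. \<Prod>i\<in>{Suc j..Suc j + n}. M i (if i = Suc j then t' else i \<in> T) (Suc i \<in> T)"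
  have IH: "(\<Sum>T\<in>Pow ?B. ?F t' T) = (\<Prod>i\<in>{Suc j..Suc j + n}. \<sigma> i) * V (Suc j) t'" for t'
    using Suc.prems by (intro Suc.IH) auto
  have split: "prod f {j..j + Suc n} = f j * prod f {Suc j..Suc j + n}" for f :: "nat \<Rightarrow> 'a"
    by (subst prod.atLeast_Suc_atMost) simp_all
  have first: "(\<Prod>i\<in>{j..j + Suc n}. M i (if i = j then t else i \<in> T) (Suc i \<in> T))
      = M j t (Suc j \<in> T) * ?F (Suc j \<in> T) T" for T
    unfolding split by (intro arg_cong2[where f = "(*)"] prod.cong) auto
  have "(\<Sum>T\<in>Pow {Suc j..j + Suc n}. \<Prod>i\<in>{j..j + Suc n}. M i (if i = j then t else i \<in> T) (Suc i \<in> T))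
      = (\<Sum>T\<in>Pow (insert (Suc j) ?B). M j t (Suc j \<in> T) * ?F (Suc j \<in> T) T)"
    unfolding first by (rule sum.cong) auto
  also have "\<dots> = (\<Sum>T\<in>Pow ?B. M j t (Suc j \<in> T) * ?F (Suc j \<in> T) T)
      + (\<Sum>T\<in>Pow ?B. M j t (Suc j \<in> insert (Suc j) T) *
          ?F (Suc j \<in> insert (Suc j) T) (insert (Suc j) T))"
    by (rule sum_Pow_insert) auto
  also have "\<dots> = (\<Sum>T\<in>Pow ?B. M j t False * ?F False T) + (\<Sum>T\<in>Pow ?B. M j t True * ?F True T)"
  proof (intro arg_cong2[where f = "(+)"] sum.cong[OF refl])
    fix T assume T: "T \<in> Pow ?B"
    hence "Suc j \<notin> T" by auto
    thus "M j t (Suc j \<in> T) * ?F (Suc j \<in> T) T = M j t False * ?F False T" by (simp only:)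
    have "?F True (insert (Suc j) T) = ?F True T" using T by (intro prod.cong) auto
    thus "M j t (Suc j \<in> insert (Suc j) T) * ?F (Suc j \<in> insert (Suc j) T) (insert (Suc j) T)
      = M j t True * ?F True T" by (simp only: insertI1)
  qed
  also have "\<dots> = (\<Prod>i\<in>{Suc j..Suc j + n}. \<sigma> i) *
      (M j t False * V (Suc j) False + M j t True * V (Suc j) True)"
    by (simp only: sum_distrib_left[symmetric] IH) (simp add: algebra_simps)
  also have "\<dots> = (\<Prod>i\<in>{j..j + Suc n}. \<sigma> i) * V j t"
    by (simp only: split Suc.prems(1)[OF order_refl le_add1]) (simp add: ac_simps)
  finally show ?case .
qed

lemma sum_Pow_transfer_gauge:
  fixes M :: "nat \<Rightarrow> bool \<Rightarrow> bool \<Rightarrow> 'a::comm_semiring_1"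
  assumes "\<And>i t. j \<le> i \<Longrightarrow> i \<le> j + n \<Longrightarrow>
      M i t False * V (Suc i) False + M i t True * V (Suc i) True = \<sigma> i * V i t"
    and "\<And>t. V (Suc (j + n)) t = (if t then 0 else 1)"
  shows "(\<Sum>T\<in>Pow {j..j + n}. \<Prod>i\<in>{j..j + n}. M i (i \<in> T) (Suc i \<in> T))
    = (\<Prod>i\<in>{j..j + n}. \<sigma> i) * (V j False + V j True)"
proof -
  let ?S = "\<lambda>t. \<Sum>T\<in>Pow {Suc j..j + n}. \<Prod>i\<in>{j..j + n}. M i (if i = j then t else i \<in> T) (Suc i \<in> T)"
  have "Pow {j..j + n} = Pow (insert j {Suc j..j + n})" by (rule arg_cong[where f = Pow]) auto
  hence "(\<Sum>T\<in>Pow {j..j + n}. \<Prod>i\<in>{j..j + n}. M i (i \<in> T) (Suc i \<in> T))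
      = (\<Sum>T\<in>Pow {Suc j..j + n}. \<Prod>i\<in>{j..j + n}. M i (i \<in> T) (Suc i \<in> T))
      + (\<Sum>T\<in>Pow {Suc j..j + n}. \<Prod>i\<in>{j..j + n}. M i (i \<in> insert j T) (Suc i \<in> insert j T))"
    by (simp only:) (rule sum_Pow_insert, auto)
  also have "\<dots> = ?S False + ?S True"
  proof (intro arg_cong2[where f = "(+)"] sum.cong[OF refl] prod.cong[OF refl])
    fix T i assume "T \<in> Pow {Suc j..j + n}" "i \<in> {j..j + n}"
    hence "j \<notin> T" "Suc i \<noteq> j" by auto
    thus "M i (i \<in> T) (Suc i \<in> T) = M i (if i = j then False else i \<in> T) (Suc i \<in> T)"
      "M i (i \<in> insert j T) (Suc i \<in> insert j T) = M i (if i = j then True else i \<in> T) (Suc i \<in> T)"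
      by (cases "i = j"; simp)+
  qed
  finally show ?thesis by (simp only: transfer_gauge_sum[OF assms] distrib_left)
qed

lemma prod_greaterThanAtMost_Suc:
  "(r::nat) \<le> m \<Longrightarrow> (\<Prod>a\<in>{r<..Suc m}. f a) = f (Suc m) * (\<Prod>a\<in>{r<..m}. f a)"
proof -
  assume "r \<le> m"
  hence "{r<..Suc m} = insert (Suc m) {r<..m}" by auto
  thus ?thesis by simp
qed

lemma prod_greaterThanAtMost_pred:
  "1 \<le> (r::nat) \<Longrightarrow> r \<le> m \<Longrightarrow> (\<Prod>a\<in>{r - 1<..m}. f a) = f r * (\<Prod>a\<in>{r<..m}. f a)"
proof -
  assume "1 \<le> r" "r \<le> m"
  hence "{r - 1<..m} = insert r {r<..m}" by auto
  thus ?thesis by simp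
qed

text \<open>The local weights of row \<open>j\<close>, in terms of \<open>m = \<mu>\<^sub>j\<close>, \<open>m' = \<mu>\<^bsub>j+1\<^esub>\<close>, \<open>r = \<rho>\<^sub>j\<close>,
  \<open>r' = \<rho>\<^bsub>j+1\<^esub>\<close>, where \<open>\<rho>\<close> is the shape whose coefficient is compared, the factors \<open>z a\<close> of the
  cells \<open>(j, a)\<close> filled with \<open>d\<close>, and \<open>Q\<close>, \<open>Y\<close> with \<open>1 + \<beta> z a = Q \<cdot> Y a\<close>.
  \<^item> \<open>transfer_entry \<dots> t t'\<close>: row \<open>j\<close> of \<open>\<beta>\<^bsup>|T|\<^esup>\<close> times the branching weight of \<open>\<mu> + T\<close> over \<open>\<rho>\<close>,
    where \<open>t\<close>, \<open>t'\<close> tell whether \<open>T\<close> contains \<open>j\<close>, \<open>j + 1\<close> (zero if \<open>\<mu> + T\<close> is not a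
    partition or \<open>\<rho>\<close> does not interlace it);
  \<^item> \<open>row_ratio \<dots> k\<close>: row \<open>j\<close> of the branching weight of \<open>\<mu>\<close> over \<open>k\<close>, divided by the
    ratio of the content factors of \<open>k\<close> and \<open>\<mu>\<close>;
  \<^item> \<open>row_sigma\<close>: \<open>row_ratio\<close> summed over the two possible values \<open>k\<^sub>j \<in> {r, r - 1}\<close>;
  \<^item> \<open>gauge\<close>, \<open>gauge_next\<close>: the gauge vector at rows \<open>j\<close> and \<open>j + 1\<close>.\<close>

definition transfer_entry ::
  "'a::field \<Rightarrow> 'a \<Rightarrow> (nat \<Rightarrow> 'a) \<Rightarrow> (nat \<Rightarrow> 'a) \<Rightarrow> nat \<Rightarrow> nat \<Rightarrow> nat \<Rightarrow> bool \<Rightarrow> bool \<Rightarrow> 'a" where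
  "transfer_entry \<beta> Q z Y m m' r t t' =
    (if t' \<and> \<not> m' < m then 0 else
     if m' + (if t' then 1 else 0) \<le> r \<and> r \<le> m + (if t then 1 else 0)
     then (if t then \<beta> else 1) * (\<Prod>a\<in>{r<..m + (if t then 1 else 0)}. z a) *
          (if m' + (if t' then 1 else 0) < r then 1 + \<beta> * z r else 1)
     else 0)"

definition row_ratio :: "'a::field \<Rightarrow> 'a \<Rightarrow> (nat \<Rightarrow> 'a) \<Rightarrow> (nat \<Rightarrow> 'a) \<Rightarrow> nat \<Rightarrow> nat \<Rightarrow> nat \<Rightarrow> 'a" where
  "row_ratio \<beta> Q z Y m m' k =
    (if m' \<le> k \<and> k \<le> m then (\<Prod>a\<in>{k<..m}. z a) * (if m' < k then Q * Y m' else 1) else 0)"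

definition row_sigma ::
  "'a::field \<Rightarrow> 'a \<Rightarrow> (nat \<Rightarrow> 'a) \<Rightarrow> (nat \<Rightarrow> 'a) \<Rightarrow> nat \<Rightarrow> nat \<Rightarrow> nat \<Rightarrow> nat \<Rightarrow> 'a" where
  "row_sigma \<beta> Q z Y m m' r r' =
    row_ratio \<beta> Q z Y m m' r + (if r' < r then \<beta> * row_ratio \<beta> Q z Y m m' (r - 1) else 0)"

definition gauge :: "'a::field \<Rightarrow> 'a \<Rightarrow> (nat \<Rightarrow> 'a) \<Rightarrow> (nat \<Rightarrow> 'a) \<Rightarrow> nat \<Rightarrow> nat \<Rightarrow> bool \<Rightarrow> 'a" where
  "gauge \<beta> Q z Y m r t =
    (if t then (if r \<le> m then \<beta> * z (Suc m) else if r = Suc m then Q * Y (Suc m) else 0)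
     else (if r \<le> m then 1 else 0))"

definition gauge_next :: "'a::field \<Rightarrow> 'a \<Rightarrow> (nat \<Rightarrow> 'a) \<Rightarrow> (nat \<Rightarrow> 'a) \<Rightarrow> nat \<Rightarrow> nat \<Rightarrow> bool \<Rightarrow> 'a" where
  "gauge_next \<beta> Q z Y m' r' t =
    (if t then (if r' \<le> m' then \<beta> * z m' else if r' = Suc m' then Q * Y m' else 0)
     else (if r' \<le> m' then 1 else 0))"

context
  fixes \<beta> Q :: "'a::field" and z Y :: "nat \<Rightarrow> 'a"
  assumes factor: "\<And>a. 1 + \<beta> * z a = Q * Y a"
begin

lemma transfer_gauge_unmarked:
  assumes mm: "m' \<le> m" and rr: "r' \<le> r" and rm': "r' \<le> Suc m'" and rm: "r \<le> m"
  shows "transfer_entry \<beta> Q z Y m m' r False False * gauge_next \<beta> Q z Y m' r' False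
     + transfer_entry \<beta> Q z Y m m' r False True * gauge_next \<beta> Q z Y m' r' True
     = row_sigma \<beta> Q z Y m m' r r'"
proof -
  let ?P = "\<lambda>k. \<Prod>a\<in>{k<..m}. z a"
  consider "r \<le> m'" | (eq1) "r = Suc m'" | (gt) "Suc m' < r" by linarith
  thus ?thesis
  proof cases
    case 1
    thus ?thesis
      using rr rm' by (auto simp: transfer_entry_def gauge_next_def row_sigma_def row_ratio_def)
  next
    case eq1
    have pr: "?P (r - 1) = z r * ?P r" using eq1 rm by (intro prod_greaterThanAtMost_pred) auto
    show ?thesis
    proof (cases "r' \<le> m'")
      case True
      have "transfer_entry \<beta> Q z Y m m' r False False * gauge_next \<beta> Q z Y m' r' False
          + transfer_entry \<beta> Q z Y m m' r False True * gauge_next \<beta> Q z Y m' r' True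
          = ?P r * (1 + \<beta> * z r) + ?P r * (\<beta> * z m')"
        using eq1 rm True by (simp add: transfer_entry_def gauge_next_def)
      also have "\<dots> = ?P r * (1 + \<beta> * z m') + \<beta> * (z r * ?P r)"
        by (simp add: algebra_simps)
      also have "\<dots> = row_sigma \<beta> Q z Y m m' r r'"
        using eq1 True rm pr factor[of m'] by (simp add: row_sigma_def row_ratio_def)
      finally show ?thesis .
    next
      case False
      thus ?thesis using eq1 rm rm'
        by (simp add: transfer_entry_def gauge_next_def row_sigma_def row_ratio_def)
    qed
  next
    case gt
    have pr: "?P (r - 1) = z r * ?P r" using gt rm by (intro prod_greaterThanAtMost_pred) auto
    have "transfer_entry \<beta> Q z Y m m' r False False * gauge_next \<beta> Q z Y m' r' False
        + transfer_entry \<beta> Q z Y m m' r False True * gauge_next \<beta> Q z Y m' r' True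
        = ?P r * (1 + \<beta> * z r) * (gauge_next \<beta> Q z Y m' r' False + gauge_next \<beta> Q z Y m' r' True)"
      using gt rm by (simp add: transfer_entry_def algebra_simps)
    also have "gauge_next \<beta> Q z Y m' r' False + gauge_next \<beta> Q z Y m' r' True = Q * Y m'"
      using rm' factor[of m'] by (auto simp: gauge_next_def)
    also have "?P r * (1 + \<beta> * z r) * (Q * Y m') = row_sigma \<beta> Q z Y m m' r r'"
    proof -
      have "row_ratio \<beta> Q z Y m m' r = ?P r * (Q * Y m')"
        "row_ratio \<beta> Q z Y m m' (r - 1) = z r * ?P r * (Q * Y m')"
        using gt rm pr by (auto simp: row_ratio_def)
      thus ?thesis using gt rm' by (simp add: row_sigma_def algebra_simps)
    qed
    finally show ?thesis .
  qed
qed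

lemma transfer_gauge_marked:
  assumes mm: "m' \<le> m" and rr: "r' \<le> r" and rm': "r' \<le> Suc m'" and eq: "r = Suc m"
  shows "transfer_entry \<beta> Q z Y m m' r True False * gauge_next \<beta> Q z Y m' r' False
     + transfer_entry \<beta> Q z Y m m' r True True * gauge_next \<beta> Q z Y m' r' True
     = row_sigma \<beta> Q z Y m m' r r' * gauge \<beta> Q z Y m r True"
proof (cases "r' \<le> m'")
  case True
  show ?thesis
  proof (cases "m' < m")
    case True3: True
    have "transfer_entry \<beta> Q z Y m m' r True False * gauge_next \<beta> Q z Y m' r' False
        + transfer_entry \<beta> Q z Y m m' r True True * gauge_next \<beta> Q z Y m' r' True
        = \<beta> * (1 + \<beta> * z (Suc m)) * (1 + \<beta> * z m')"
      using True True3 eq by (simp add: transfer_entry_def gauge_next_def algebra_simps)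
    also have "\<dots> = row_sigma \<beta> Q z Y m m' r r' * gauge \<beta> Q z Y m r True"
      using True True3 eq factor[of "Suc m"] factor[of m']
      by (simp add: gauge_def row_sigma_def row_ratio_def algebra_simps)
    finally show ?thesis .
  next
    case False
    hence "m' = m" using mm by simp
    thus ?thesis using True eq factor[of "Suc m"]
      by (simp add: transfer_entry_def gauge_def gauge_next_def row_sigma_def row_ratio_def algebra_simps)
  qed
next
  case False
  hence r': "r' = Suc m'" using rm' by simp
  show ?thesis
  proof (cases "m' < m")
    case True
    thus ?thesis using r' eq factor[of "Suc m"]
      by (simp add: transfer_entry_def gauge_def gauge_next_def row_sigma_def row_ratio_def algebra_simps)
  next
    case False
    hence "m' = m" using mm by simp
    thus ?thesis using r' eq
      by (simp add: transfer_entry_def gauge_def gauge_next_def row_sigma_def row_ratio_def)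
  qed
qed

lemma transfer_gauge:
  assumes mm: "m' \<le> m" and rr: "r' \<le> r" and rm': "r' \<le> Suc m'"
  shows "transfer_entry \<beta> Q z Y m m' r t False * gauge_next \<beta> Q z Y m' r' False
     + transfer_entry \<beta> Q z Y m m' r t True * gauge_next \<beta> Q z Y m' r' True
     = row_sigma \<beta> Q z Y m m' r r' * gauge \<beta> Q z Y m r t"
proof -
  consider (le) "r \<le> m" | (eq) "r = Suc m" | (gt) "Suc m < r" by linarith
  thus ?thesis
  proof cases
    case le
    note unmarked = transfer_gauge_unmarked[OF mm rr rm' le]
    show ?thesis
    proof (cases t)
      case True
      have "transfer_entry \<beta> Q z Y m m' r True t' = \<beta> * z (Suc m) * transfer_entry \<beta> Q z Y m m' r False t'"
        for t' using le by (simp add: transfer_entry_def prod_greaterThanAtMost_Suc)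
      hence "transfer_entry \<beta> Q z Y m m' r t False * gauge_next \<beta> Q z Y m' r' False
          + transfer_entry \<beta> Q z Y m m' r t True * gauge_next \<beta> Q z Y m' r' True
          = \<beta> * z (Suc m) * row_sigma \<beta> Q z Y m m' r r'"
        using True by (simp add: unmarked[symmetric] algebra_simps)
      thus ?thesis using True le by (simp add: gauge_def algebra_simps)
    qed (use unmarked le in \<open>simp add: gauge_def\<close>)
  next
    case eq
    thus ?thesis using transfer_gauge_marked[OF mm rr rm' eq]
      by (cases t) (simp_all add: transfer_entry_def gauge_def)
  qed (simp add: transfer_entry_def gauge_def)
qed

end

section \<open>Adding and removing boxes\<close>

text \<open>Adding one box to each row of \<open>T\<close> keeps \<open>\<mu>\<close> a partition iff \<open>T \<subseteq> addable_rows \<mu>\<close>; then the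
  added boxes lie in distinct rows and columns, so \<open>add_boxes \<mu> T \<mapsto> \<mu>\<close> for \<open>T \<noteq> {}\<close>.\<close>

definition addable_rows :: "(nat \<Rightarrow> nat) \<Rightarrow> nat set" where
  "addable_rows k = {i. 1 \<le> i \<and> (i = 1 \<or> k i < k (i - 1))}"

definition removable_rows :: "(nat \<Rightarrow> nat) \<Rightarrow> nat set" where
  "removable_rows r = {i. 1 \<le> i \<and> r (Suc i) < r i}"

definition add_boxes :: "(nat \<Rightarrow> nat) \<Rightarrow> nat set \<Rightarrow> nat \<Rightarrow> nat" where
  "add_boxes k T = (\<lambda>i. k i + (if i \<in> T then 1 else 0))"

definition remove_boxes :: "(nat \<Rightarrow> nat) \<Rightarrow> nat set \<Rightarrow> nat \<Rightarrow> nat" where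
  "remove_boxes r S = (\<lambda>i. r i - (if i \<in> S then 1 else 0))"

definition is_box_extension :: "(nat \<Rightarrow> nat) \<Rightarrow> (nat \<Rightarrow> nat) \<Rightarrow> bool" where
  "is_box_extension k r \<longleftrightarrow> (\<exists>T\<subseteq>addable_rows k. r = add_boxes k T)"

definition num_changed_rows :: "(nat \<Rightarrow> nat) \<Rightarrow> (nat \<Rightarrow> nat) \<Rightarrow> nat" where
  "num_changed_rows k r = card {i. k i \<noteq> r i}"

lemma addable_rows_subset: assumes "\<forall>i>L. k i = 0" shows "addable_rows k \<subseteq> {1..Suc L}"
proof
  fix i assume i: "i \<in> addable_rows k"
  show "i \<in> {1..Suc L}"
  proof (rule ccontr)
    assume "i \<notin> {1..Suc L}"
    hence "i > Suc L" using i by (auto simp: addable_rows_def)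
    thus False using i assms by (auto simp: addable_rows_def)
  qed
qed

lemma finite_addable_rows: assumes "is_partition_fun k" shows "finite (addable_rows k)"
proof -
  obtain L where L: "\<forall>i>L. k i = 0" using assms by (auto simp: is_partition_fun_def)
  show ?thesis using addable_rows_subset[OF L] finite_subset by blast
qed

lemma removable_rows_subset: assumes "\<forall>i>L. r i = 0" shows "removable_rows r \<subseteq> {1..L}"
proof
  fix i assume i: "i \<in> removable_rows r"
  show "i \<in> {1..L}"
  proof (rule ccontr)
    assume "i \<notin> {1..L}"
    hence "i > L" using i by (auto simp: removable_rows_def)
    thus False using i assms by (auto simp: removable_rows_def)
  qed
qed

lemma add_boxes_inj: "inj_on (add_boxes k) X"
proof (rule inj_onI)
  fix T1 T2 assume e: "add_boxes k T1 = add_boxes k T2"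
  have "\<And>i. (i \<in> T1) = (i \<in> T2)"
  proof -
    fix i
    have "add_boxes k T1 i = add_boxes k T2 i" using e by simp
    thus "(i \<in> T1) = (i \<in> T2)" unfolding add_boxes_def by (simp split: if_splits)
  qed
  thus "T1 = T2" by blast
qed

lemma num_changed_rows_add_boxes: "num_changed_rows k (add_boxes k T) = card T"
  unfolding num_changed_rows_def add_boxes_def by (rule arg_cong[where f=card]) auto

lemma is_partition_fun_add_boxes:
  assumes k: "is_partition_fun k" and T: "T \<subseteq> addable_rows k"
  shows "is_partition_fun (add_boxes k T)"
  unfolding is_partition_fun_def
proof (intro conjI allI impI)
  have "0 \<notin> T" using T by (auto simp: addable_rows_def)
  thus "add_boxes k T 0 = 0" using is_partition_fun_0[OF k] by (simp add: add_boxes_def)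
  obtain L where L: "\<forall>i>L. k i = 0" using k by (auto simp: is_partition_fun_def)
  show "\<exists>L. \<forall>i>L. add_boxes k T i = 0"
  proof (intro exI allI impI)
    fix i assume "i > Suc L"
    thus "add_boxes k T i = 0" using L addable_rows_subset[OF L] T by (auto simp: add_boxes_def)
  qed
  fix i j :: nat assume ij: "1 \<le> i" "i \<le> j"
  show "add_boxes k T j \<le> add_boxes k T i"
  proof (cases "i = j")
    case False
    hence ij2: "i < j" using ij by simp
    have m1: "k j \<le> k (Suc i)" using is_partition_fun_mono[OF k, of "Suc i" j] ij2 by simp
    have m2: "k (Suc i) \<le> k i" using is_partition_fun_mono[OF k ij(1), of "Suc i"] by simp
    show ?thesis
    proof (cases "j \<in> T")
      case True
      hence "k j < k (j - 1)" using T ij2 ij by (auto simp: addable_rows_def)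
      moreover have "k (j - 1) \<le> k i"
        using is_partition_fun_mono[OF k ij(1), of "j - 1"] ij2 by simp
      ultimately show ?thesis by (auto simp: add_boxes_def)
    next
      case False
      thus ?thesis using m1 m2 by (auto simp: add_boxes_def)
    qed
  qed simp
qed

lemma add_boxes_removable:
  assumes k: "is_partition_fun k" and T: "T \<subseteq> addable_rows k"
  shows "T \<subseteq> removable_rows (add_boxes k T)" "k = remove_boxes (add_boxes k T) T"
proof -
  show "k = remove_boxes (add_boxes k T) T" by (auto simp: remove_boxes_def add_boxes_def)
  show "T \<subseteq> removable_rows (add_boxes k T)"
  proof
    fix i assume i: "i \<in> T"
    have "i \<in> addable_rows k" using T i by blast
    hence i1: "1 \<le> i" by (simp add: addable_rows_def)
    have "add_boxes k T (Suc i) < add_boxes k T i"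
    proof (cases "Suc i \<in> T")
      case True
      have "Suc i \<in> addable_rows k" using T True by blast
      hence "k (Suc i) < k i" using i1 unfolding addable_rows_def by simp
      thus ?thesis using i True by (simp add: add_boxes_def)
    next
      case False
      have "k (Suc i) \<le> k i" using is_partition_fun_mono[OF k i1, of "Suc i"] by simp
      thus ?thesis using i False by (simp add: add_boxes_def)
    qed
    thus "i \<in> removable_rows (add_boxes k T)" using i1 by (simp add: removable_rows_def)
  qed
qed

lemma add_remove_boxes:
  "S \<subseteq> removable_rows r \<Longrightarrow> r = add_boxes (remove_boxes r S) S"
  by (auto simp: remove_boxes_def add_boxes_def removable_rows_def fun_eq_iff)

lemma removable_subset_addable_rows_remove_boxes:
  assumes r: "is_partition_fun r" and S: "S \<subseteq> removable_rows r"
  shows "S \<subseteq> addable_rows (remove_boxes r S)"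
proof
  fix i assume i: "i \<in> S"
  hence i1: "1 \<le> i" and ri: "1 \<le> r i" using S by (auto simp: removable_rows_def)
  show "i \<in> addable_rows (remove_boxes r S)"
  proof (cases "i = 1")
    case False
    hence i2: "2 \<le> i" using i1 by simp
    have "r i \<le> r (i - 1)" using is_partition_fun_mono[OF r, of "i - 1" i] i2 by simp
    moreover have "r i < r (i - 1)" if "i - 1 \<in> S"
      using that S i2 by (auto simp: removable_rows_def)
    ultimately have "remove_boxes r S i < remove_boxes r S (i - 1)"
      using i ri by (auto simp: remove_boxes_def)
    thus ?thesis using i1 by (simp add: addable_rows_def)
  qed (simp add: addable_rows_def)
qed

lemma remove_boxes_inj: "inj_on (remove_boxes r) (Pow (removable_rows r))"
proof (rule inj_onI)
  fix S1 S2
  assume S: "S1 \<in> Pow (removable_rows r)" "S2 \<in> Pow (removable_rows r)"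
    "remove_boxes r S1 = remove_boxes r S2"
  have pos: "\<And>i. i \<in> removable_rows r \<Longrightarrow> 1 \<le> r i" by (auto simp: removable_rows_def)
  have "\<And>i. (i \<in> S1) = (i \<in> S2)"
  proof -
    fix i
    have "remove_boxes r S1 i = remove_boxes r S2 i" using S by simp
    thus "(i \<in> S1) = (i \<in> S2)" using S pos[of i] by (auto simp: remove_boxes_def split: if_splits)
  qed
  thus "S1 = S2" by blast
qed

lemma num_changed_rows_remove_boxes:
  assumes "S \<subseteq> removable_rows r" shows "num_changed_rows (remove_boxes r S) r = card S"
proof -
  have "{i. remove_boxes r S i \<noteq> r i} = S"
    using assms by (auto simp: remove_boxes_def removable_rows_def)
  thus ?thesis by (simp add: num_changed_rows_def)
qed

section \<open>Comparing coefficients in the induction step\<close>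

definition strip_weight ::
  "'a::field \<Rightarrow> (nat \<Rightarrow> 'a) \<Rightarrow> (nat \<Rightarrow> 'a) \<Rightarrow> nat \<Rightarrow> (nat \<Rightarrow> nat) \<Rightarrow> (nat \<Rightarrow> nat) \<Rightarrow> 'a" where
  "strip_weight \<beta> x y d m k = (\<Prod>i\<in>{1..d}. row_weight \<beta> x y d i (m i) (k i) (m (Suc i)))"

definition content_factor :: "'a::field \<Rightarrow> (nat \<Rightarrow> 'a) \<Rightarrow> nat \<Rightarrow> (nat \<Rightarrow> nat) \<Rightarrow> 'a" where
  "content_factor \<beta> y d m = (\<Prod>i\<in>{1..d}. 1 + \<beta> * y (m i + d - i + 1))"

definition row_cell_factor :: "'a::field \<Rightarrow> (nat \<Rightarrow> 'a) \<Rightarrow> (nat \<Rightarrow> 'a) \<Rightarrow> nat \<Rightarrow> nat \<Rightarrow> nat \<Rightarrow> 'a" where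
  "row_cell_factor \<beta> x y d i a = cell_factor \<beta> x y d (i, a)"

definition shifted_y_factor :: "'a::field \<Rightarrow> (nat \<Rightarrow> 'a) \<Rightarrow> nat \<Rightarrow> nat \<Rightarrow> nat \<Rightarrow> 'a" where
  "shifted_y_factor \<beta> y d i a = 1 + \<beta> * y (a + d - i)"

definition transfer_row :: "'a::field \<Rightarrow> (nat \<Rightarrow> 'a) \<Rightarrow> (nat \<Rightarrow> 'a) \<Rightarrow> nat \<Rightarrow> (nat \<Rightarrow> nat) \<Rightarrow>
    (nat \<Rightarrow> nat) \<Rightarrow> nat \<Rightarrow> bool \<Rightarrow> bool \<Rightarrow> 'a" where
  "transfer_row \<beta> x y d m r j = transfer_entry \<beta> (1 + \<beta> * x d) (row_cell_factor \<beta> x y d j)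
     (shifted_y_factor \<beta> y d j) (m j) (m (Suc j)) (r j)"

definition sigma_row ::
  "'a::field \<Rightarrow> (nat \<Rightarrow> 'a) \<Rightarrow> (nat \<Rightarrow> 'a) \<Rightarrow> nat \<Rightarrow> (nat \<Rightarrow> nat) \<Rightarrow> (nat \<Rightarrow> nat) \<Rightarrow> nat \<Rightarrow> 'a" where
  "sigma_row \<beta> x y d m r j = row_sigma \<beta> (1 + \<beta> * x d) (row_cell_factor \<beta> x y d j)
     (shifted_y_factor \<beta> y d j) (m j) (m (Suc j)) (r j) (r (Suc j))"

definition ratio_row ::
  "'a::field \<Rightarrow> (nat \<Rightarrow> 'a) \<Rightarrow> (nat \<Rightarrow> 'a) \<Rightarrow> nat \<Rightarrow> (nat \<Rightarrow> nat) \<Rightarrow> nat \<Rightarrow> nat \<Rightarrow> 'a" where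
  "ratio_row \<beta> x y d m j = row_ratio \<beta> (1 + \<beta> * x d) (row_cell_factor \<beta> x y d j)
     (shifted_y_factor \<beta> y d j) (m j) (m (Suc j))"

definition gauge_row :: "'a::field \<Rightarrow> (nat \<Rightarrow> 'a) \<Rightarrow> (nat \<Rightarrow> 'a) \<Rightarrow> nat \<Rightarrow> (nat \<Rightarrow> nat) \<Rightarrow>
    (nat \<Rightarrow> nat) \<Rightarrow> nat \<Rightarrow> bool \<Rightarrow> 'a" where
  "gauge_row \<beta> x y d m r j t = (if j = Suc d then (if t then 0 else 1)
     else gauge \<beta> (1 + \<beta> * x d) (row_cell_factor \<beta> x y d j) (shifted_y_factor \<beta> y d j) (m j) (r j) t)"

text \<open>In the induction step \<open>d = e + 1\<close> of the Pieri rule, the coefficients of \<open>G\<^sub>e(\<rho>)\<close> on the two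
  sides, after expanding by the branching rule (and, on the left, the induction hypothesis).\<close>

definition pieri_lhs_coeff ::
  "'a::field \<Rightarrow> (nat \<Rightarrow> 'a) \<Rightarrow> (nat \<Rightarrow> 'a) \<Rightarrow> nat \<Rightarrow> (nat \<Rightarrow> nat) \<Rightarrow> (nat \<Rightarrow> nat) \<Rightarrow> 'a" where
  "pieri_lhs_coeff \<beta> x y e m r = (\<Sum>k\<in>{k. interlaces m k}.
     (if is_box_extension k r then \<beta> ^ num_changed_rows k r else 0) *
     ((1 + \<beta> * x (Suc e)) * content_factor \<beta> y (Suc e) m * strip_weight \<beta> x y (Suc e) m k /
      content_factor \<beta> y e k))"

definition pieri_rhs_coeff ::
  "'a::field \<Rightarrow> (nat \<Rightarrow> 'a) \<Rightarrow> (nat \<Rightarrow> 'a) \<Rightarrow> nat \<Rightarrow> (nat \<Rightarrow> nat) \<Rightarrow> (nat \<Rightarrow> nat) \<Rightarrow> 'a" where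
  "pieri_rhs_coeff \<beta> x y e m r = (\<Sum>T\<in>Pow (addable_rows m \<inter> {1..Suc e}). \<beta> ^ card T *
     (if interlaces (add_boxes m T) r then strip_weight \<beta> x y (Suc e) (add_boxes m T) r else 0))"

lemma content_idx_eq: "i \<le> r \<Longrightarrow> content_idx r (i, a) = a + r - i"
  by (simp add: content_idx_def)

lemma one_plus_row_cell_factor:
  "i \<le> d \<Longrightarrow> 1 + \<beta> * row_cell_factor \<beta> x y d i a = (1 + \<beta> * x d) * shifted_y_factor \<beta> y d i a"
  by (simp add: row_cell_factor_def shifted_y_factor_def cell_factor_def goplus_def content_idx_eq
      algebra_simps)

lemma row_cell_factor_Suc:
  "Suc i \<le> d \<Longrightarrow> row_cell_factor \<beta> x y d (Suc i) (Suc a) = row_cell_factor \<beta> x y d i a"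
  by (simp add: row_cell_factor_def cell_factor_def content_idx_eq)

lemma shifted_y_factor_Suc: "shifted_y_factor \<beta> y d (Suc i) (Suc a) = shifted_y_factor \<beta> y d i a"
  by (simp add: shifted_y_factor_def)

lemma prod_if_else_0:
  assumes "finite S"
  shows "(\<Prod>j\<in>S. if P j then f j else 0) = (if (\<forall>j\<in>S. P j) then prod f S else (0::'a::comm_semiring_1))"
proof (cases "\<forall>j\<in>S. P j")
  case True thus ?thesis by (auto intro: prod.cong)
next
  case False
  then obtain j where "j \<in> S" "\<not> P j" by blast
  thus ?thesis using assms False by (auto intro!: prod_zero)
qed

lemma prod_if_mem_power_card:
  assumes "T \<subseteq> A" "finite A"
  shows "(\<Prod>j\<in>A. if j \<in> T then \<beta> else 1) = \<beta> ^ card T"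
proof -
  have "(\<Prod>j\<in>A. if j \<in> T then \<beta> else 1) = (\<Prod>j\<in>{j\<in>A. j \<in> T}. \<beta>)"
    using prod.inter_filter[OF assms(2), of "\<lambda>_. \<beta>" "\<lambda>j. j \<in> T"] by simp
  also have "{j\<in>A. j \<in> T} = T" using assms by auto
  finally show ?thesis by simp
qed


lemma prod_add_if_mem:
  fixes f g :: "'b \<Rightarrow> 'a::comm_semiring_1"
  assumes A: "finite A" and R: "R \<subseteq> A"
  shows "(\<Prod>j\<in>A. (if j \<in> R then g j else 0) + f j) = (\<Sum>S\<in>Pow R. (\<Prod>j\<in>S. g j) * (\<Prod>j\<in>A - S. f j))"
proof -
  let ?g = "\<lambda>j. if j \<in> R then g j else 0"
  have "(\<Prod>j\<in>A. ?g j + f j) = (\<Sum>S\<in>Pow A. (\<Prod>j\<in>S. ?g j) * (\<Prod>j\<in>A - S. f j))"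
    by (rule prod_add[OF A])
  also have "\<dots> = (\<Sum>S\<in>Pow R. (\<Prod>j\<in>S. ?g j) * (\<Prod>j\<in>A - S. f j))"
  proof (rule sum.mono_neutral_right)
    show "\<forall>S\<in>Pow A - Pow R. (\<Prod>j\<in>S. ?g j) * (\<Prod>j\<in>A - S. f j) = 0"
    proof
      fix S assume S: "S \<in> Pow A - Pow R"
      then obtain j where "j \<in> S" "j \<notin> R" by auto
      moreover have "finite S" using S A finite_subset by auto
      ultimately have "(\<Prod>j\<in>S. ?g j) = 0" by (intro prod_zero) auto
      thus "(\<Prod>j\<in>S. ?g j) * (\<Prod>j\<in>A - S. f j) = 0" by simp
    qed
  qed (use A R in auto)
  also have "\<dots> = (\<Sum>S\<in>Pow R. (\<Prod>j\<in>S. g j) * (\<Prod>j\<in>A - S. f j))"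
    by (intro sum.cong refl arg_cong2[where f = "(*)"] prod.cong) auto
  finally show ?thesis .
qed

lemma subset_addable_rows_iff:
  assumes T: "T \<subseteq> {1..n}"
  shows "(\<forall>j\<in>{1..n}. Suc j \<in> T \<longrightarrow> m (Suc j) < m j) \<longleftrightarrow> T \<subseteq> addable_rows m"
proof
  assume a: "\<forall>j\<in>{1..n}. Suc j \<in> T \<longrightarrow> m (Suc j) < m j"
  show "T \<subseteq> addable_rows m"
  proof
    fix i assume i: "i \<in> T"
    hence i1: "1 \<le> i" "i \<le> n" using T by auto
    show "i \<in> addable_rows m"
    proof (cases "i = 1")
      case False
      hence "i - 1 \<in> {1..n}" "Suc (i - 1) = i" using i1 by auto
      hence "m i < m (i - 1)" using a i by force
      thus ?thesis using i1 by (simp add: addable_rows_def)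
    qed (simp add: addable_rows_def)
  qed
qed (auto simp: addable_rows_def)

lemma content_factor_Suc_shifted:
  assumes "\<forall>i>Suc e. m i = 0"
  shows "content_factor \<beta> y (Suc e) m =
    shifted_y_factor \<beta> y (Suc e) 1 (Suc (m 1)) * (\<Prod>i\<in>{1..e}. shifted_y_factor \<beta> y (Suc e) i (m (Suc i)))"
proof -
  let ?Y = "shifted_y_factor \<beta> y (Suc e)"
  have "content_factor \<beta> y (Suc e) m = (\<Prod>i\<in>{1..Suc e}. ?Y i (Suc (m i)))"
    unfolding content_factor_def shifted_y_factor_def
    by (intro prod.cong refl) (simp add: Suc_diff_le)
  also have "\<dots> = ?Y 1 (Suc (m 1)) * (\<Prod>i\<in>{Suc 1..Suc e}. ?Y i (Suc (m i)))"
    by (rule prod.atLeast_Suc_atMost) simp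
  also have "(\<Prod>i\<in>{Suc 1..Suc e}. ?Y i (Suc (m i))) = (\<Prod>i\<in>{1..e}. ?Y (Suc i) (Suc (m (Suc i))))"
    by (rule prod.shift_bounds_cl_Suc_ivl)
  also have "\<dots> = (\<Prod>i\<in>{1..e}. ?Y i (m (Suc i)))" by (simp add: shifted_y_factor_Suc)
  finally show ?thesis .
qed

lemma content_factor_shifted:
  "content_factor \<beta> y e k = (\<Prod>i\<in>{1..e}. shifted_y_factor \<beta> y (Suc e) i (k i))"
  unfolding content_factor_def shifted_y_factor_def
    by (intro prod.cong refl) (simp add: Suc_diff_le)

lemma row_weight_eq_ratio_row:
  assumes i: "1 \<le> i" "i \<le> e" and b: "m (Suc i) \<le> k" "k \<le> m i"
    and nz: "shifted_y_factor \<beta> y (Suc e) i k \<noteq> 0"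
  shows "shifted_y_factor \<beta> y (Suc e) i (m (Suc i)) * row_weight \<beta> x y (Suc e) i (m i) k (m (Suc i)) /
      shifted_y_factor \<beta> y (Suc e) i k = ratio_row \<beta> x y (Suc e) m i k"
proof (cases "m (Suc i) < k")
  case True
  have "1 + \<beta> * row_cell_factor \<beta> x y (Suc e) i k = (1 + \<beta> * x (Suc e)) * shifted_y_factor \<beta> y (Suc e) i k"
    by (rule one_plus_row_cell_factor) (use i in auto)
  thus ?thesis using True b nz
    by (simp add: row_weight_def ratio_row_def row_ratio_def row_cell_factor_def[symmetric])
next
  case False
  hence "m (Suc i) = k" using b by simp
  thus ?thesis using b nz
    by (simp add: row_weight_def ratio_row_def row_ratio_def row_cell_factor_def[symmetric])
qed

context
  fixes \<beta> :: "'a::field" and x y :: "nat \<Rightarrow> 'a" and e :: nat and m r :: "nat \<Rightarrow> nat"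
  assumes mP: "is_partition_fun m" and mD: "\<forall>i>Suc e. m i = 0"
    and rP: "is_partition_fun r" and rD: "\<forall>i>e. r i = 0"
begin

lemma interlaces_add_boxes_iff:
  assumes T: "T \<subseteq> {1..Suc e}"
  shows "(\<forall>j\<in>{1..Suc e}. add_boxes m T (Suc j) \<le> r j \<and> r j \<le> add_boxes m T j) \<longleftrightarrow>
    interlaces (add_boxes m T) r"
proof
  assume a: "\<forall>j\<in>{1..Suc e}. add_boxes m T (Suc j) \<le> r j \<and> r j \<le> add_boxes m T j"
  have zero: "add_boxes m T i = 0" if "i > Suc e" for i
    using mD T that by (auto simp: add_boxes_def)
  have "add_boxes m T (Suc i) \<le> r i \<and> r i \<le> add_boxes m T i" if "1 \<le> i" for i
  proof (cases "i \<le> Suc e")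
    case False
    thus ?thesis using zero[of i] zero[of "Suc i"] rD by simp
  qed (use a that in auto)
  thus "interlaces (add_boxes m T) r" using is_partition_fun_0[OF rP] by (simp add: interlaces_def)
qed (auto simp: interlaces_def)

lemma prod_transfer_row:
  assumes T: "T \<subseteq> {1..Suc e}"
  shows "(\<Prod>j\<in>{1..Suc e}. transfer_row \<beta> x y (Suc e) m r j (j \<in> T) (Suc j \<in> T)) =
    (if T \<subseteq> addable_rows m \<and> interlaces (add_boxes m T) r
     then \<beta> ^ card T * strip_weight \<beta> x y (Suc e) (add_boxes m T) r else 0)"
proof -
  let ?A = "{1..Suc e}" and ?n = "add_boxes m T"
  let ?P = "\<lambda>j. \<not> (Suc j \<in> T \<and> \<not> m (Suc j) < m j) \<and> ?n (Suc j) \<le> r j \<and> r j \<le> ?n j"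
  let ?C = "\<lambda>j. (if j \<in> T then \<beta> else 1) * row_weight \<beta> x y (Suc e) j (?n j) (r j) (?n (Suc j))"
  have "transfer_row \<beta> x y (Suc e) m r j (j \<in> T) (Suc j \<in> T) = (if ?P j then ?C j else 0)" for j
    by (simp add: transfer_row_def transfer_entry_def add_boxes_def row_weight_def row_cell_factor_def)
  hence "(\<Prod>j\<in>?A. transfer_row \<beta> x y (Suc e) m r j (j \<in> T) (Suc j \<in> T)) =
      (\<Prod>j\<in>?A. if ?P j then ?C j else 0)" by simp
  also have "\<dots> = (if (\<forall>j\<in>?A. ?P j) then prod ?C ?A else 0)" by (rule prod_if_else_0) simp
  also have "(\<forall>j\<in>?A. ?P j) \<longleftrightarrow> T \<subseteq> addable_rows m \<and> interlaces ?n r"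
    using subset_addable_rows_iff[OF T, of m] interlaces_add_boxes_iff[OF T] by blast
  also have "prod ?C ?A = \<beta> ^ card T * strip_weight \<beta> x y (Suc e) ?n r"
    unfolding strip_weight_def prod.distrib prod_if_mem_power_card[OF T finite_atLeastAtMost] ..
  finally show ?thesis .
qed

lemma pieri_rhs_coeff_transfer:
  "pieri_rhs_coeff \<beta> x y e m r =
    (\<Sum>T\<in>Pow {1..Suc e}. \<Prod>j\<in>{1..Suc e}. transfer_row \<beta> x y (Suc e) m r j (j \<in> T) (Suc j \<in> T))"
proof -
  let ?A = "{1..Suc e}"
  have "(\<Sum>T\<in>Pow ?A. \<Prod>j\<in>?A. transfer_row \<beta> x y (Suc e) m r j (j \<in> T) (Suc j \<in> T))
      = (\<Sum>T\<in>Pow ?A. if T \<subseteq> addable_rows m then \<beta> ^ card T * (if interlaces (add_boxes m T) r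
          then strip_weight \<beta> x y (Suc e) (add_boxes m T) r else 0) else 0)"
    using prod_transfer_row by (intro sum.cong refl) auto
  also have "\<dots> = (\<Sum>T\<in>{T\<in>Pow ?A. T \<subseteq> addable_rows m}. \<beta> ^ card T * (if interlaces (add_boxes m T) r
      then strip_weight \<beta> x y (Suc e) (add_boxes m T) r else 0))"
    by (rule sum.inter_filter[symmetric]) simp
  also have "{T\<in>Pow ?A. T \<subseteq> addable_rows m} = Pow (addable_rows m \<inter> ?A)" by auto
  finally show ?thesis by (simp add: pieri_rhs_coeff_def)
qed

lemma transfer_row_gauge:
  assumes A: "\<forall>j. r j \<le> Suc (m j)" and j: "1 \<le> j" "j \<le> Suc e"
  shows "transfer_row \<beta> x y (Suc e) m r j t False * gauge_row \<beta> x y (Suc e) m r (Suc j) False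
       + transfer_row \<beta> x y (Suc e) m r j t True * gauge_row \<beta> x y (Suc e) m r (Suc j) True
       = sigma_row \<beta> x y (Suc e) m r j * gauge_row \<beta> x y (Suc e) m r j t"
proof -
  let ?Q = "1 + \<beta> * x (Suc e)" and ?z = "row_cell_factor \<beta> x y (Suc e) j"
    and ?Y = "shifted_y_factor \<beta> y (Suc e) j"
  have mm: "m (Suc j) \<le> m j" using is_partition_fun_mono[OF mP j(1), of "Suc j"] by simp
  have rr: "r (Suc j) \<le> r j" using is_partition_fun_mono[OF rP j(1), of "Suc j"] by simp
  have rm: "r (Suc j) \<le> Suc (m (Suc j))" using A by simp
  note gauge_step = transfer_gauge[of \<beta> ?z ?Q ?Y, OF one_plus_row_cell_factor[OF j(2)] mm rr rm, of t]
  have gauge_j: "gauge_row \<beta> x y (Suc e) m r j t = gauge \<beta> ?Q ?z ?Y (m j) (r j) t"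
    using j(2) by (simp add: gauge_row_def)
  show ?thesis
  proof (cases "j = Suc e")
    case False
    hence "gauge_row \<beta> x y (Suc e) m r (Suc j) t' = gauge_next \<beta> ?Q ?z ?Y (m (Suc j)) (r (Suc j)) t'" for t'
      using j by (simp add: gauge_row_def gauge_def gauge_next_def row_cell_factor_Suc shifted_y_factor_Suc)
    thus ?thesis using gauge_step gauge_j by (simp add: transfer_row_def sigma_row_def)
  next
    case True
    \<comment> \<open>past the last row the gauge vector is \<open>(1, 0)\<close>; the mismatch in the second entry is
      multiplied by a vanishing transfer entry\<close>
    have "m (Suc j) = 0" "r (Suc j) = 0" "r j = 0" using mD rD True by auto
    hence "transfer_row \<beta> x y (Suc e) m r j t True = 0"
      "gauge_next \<beta> ?Q ?z ?Y (m (Suc j)) (r (Suc j)) False = 1"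
      by (simp_all add: transfer_row_def transfer_entry_def gauge_next_def)
    thus ?thesis
      using gauge_step gauge_j True by (simp add: transfer_row_def sigma_row_def gauge_row_def)
  qed
qed

lemma pieri_rhs_coeff_eq:
  "pieri_rhs_coeff \<beta> x y e m r = (1 + \<beta> * x (Suc e)) * shifted_y_factor \<beta> y (Suc e) 1 (Suc (m 1)) *
    (\<Prod>j\<in>{1..Suc e}. sigma_row \<beta> x y (Suc e) m r j)"
proof (cases "\<forall>j. r j \<le> Suc (m j)")
  case A: True
  let ?M = "transfer_row \<beta> x y (Suc e) m r" and ?V = "gauge_row \<beta> x y (Suc e) m r"
    and ?s = "sigma_row \<beta> x y (Suc e) m r"
  have step: "?M i t False * ?V (Suc i) False + ?M i t True * ?V (Suc i) True = ?s i * ?V i t"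
    if "1 \<le> i" "i \<le> 1 + e" for i t using transfer_row_gauge[OF A] that by simp
  have last: "?V (Suc (1 + e)) t = (if t then 0 else 1)" for t by (simp add: gauge_row_def)
  have "?V 1 False + ?V 1 True = (1 + \<beta> * x (Suc e)) * shifted_y_factor \<beta> y (Suc e) 1 (Suc (m 1))"
    using A[rule_format, of 1] one_plus_row_cell_factor[of 1 "Suc e" \<beta> x y "Suc (m 1)"]
    by (auto simp: gauge_row_def gauge_def)
  thus ?thesis
    using sum_Pow_transfer_gauge[OF step last] by (simp add: pieri_rhs_coeff_transfer ac_simps)
next
  case False
  then obtain j where j: "Suc (m j) < r j" by (auto simp: not_le)
  have j1: "1 \<le> j" using j is_partition_fun_0[OF rP] by (cases j) auto
  have j2: "j \<le> Suc e" using j rD by (metis not_le not_less0 le_SucI)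
  have "\<not> r j \<le> m j" "\<not> r j - 1 \<le> m j" using j by auto
  hence "sigma_row \<beta> x y (Suc e) m r j = 0" by (simp add: sigma_row_def row_sigma_def row_ratio_def)
  hence "(\<Prod>j\<in>{1..Suc e}. sigma_row \<beta> x y (Suc e) m r j) = 0" using j1 j2 by (intro prod_zero) auto
  moreover have "transfer_row \<beta> x y (Suc e) m r j t t' = 0" for t t'
    using j by (simp add: transfer_row_def transfer_entry_def)
  hence "(\<Sum>T\<in>Pow {1..Suc e}. \<Prod>j\<in>{1..Suc e}. transfer_row \<beta> x y (Suc e) m r j (j \<in> T) (Suc j \<in> T)) = 0"
    using j1 j2 by (intro sum.neutral ballI prod_zero finite_atLeastAtMost bexI[of _ j]) auto
  ultimately show ?thesis unfolding pieri_rhs_coeff_transfer by simp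
qed

lemma box_extensions_eq_image:
  "{k. interlaces m k \<and> is_box_extension k r} =
    remove_boxes r ` {S\<in>Pow (removable_rows r). interlaces m (remove_boxes r S)}"
proof
  show "{k. interlaces m k \<and> is_box_extension k r} \<subseteq>
      remove_boxes r ` {S\<in>Pow (removable_rows r). interlaces m (remove_boxes r S)}"
  proof
    fix k assume "k \<in> {k. interlaces m k \<and> is_box_extension k r}"
    then obtain T where il: "interlaces m k" and T: "T \<subseteq> addable_rows k" "r = add_boxes k T"
      by (auto simp: is_box_extension_def)
    have "T \<subseteq> removable_rows r" "k = remove_boxes r T"
      using add_boxes_removable[OF is_partition_fun_interlaces[OF il mD] T(1)] T(2) by auto
    thus "k \<in> remove_boxes r ` {S\<in>Pow (removable_rows r). interlaces m (remove_boxes r S)}"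
      using il by auto
  qed
  show "remove_boxes r ` {S\<in>Pow (removable_rows r). interlaces m (remove_boxes r S)} \<subseteq>
      {k. interlaces m k \<and> is_box_extension k r}"
  proof (rule image_subsetI)
    fix S assume "S \<in> {S\<in>Pow (removable_rows r). interlaces m (remove_boxes r S)}"
    hence S: "S \<subseteq> removable_rows r" "interlaces m (remove_boxes r S)" by auto
    have "is_box_extension (remove_boxes r S) r"
      unfolding is_box_extension_def
      using removable_subset_addable_rows_remove_boxes[OF rP S(1)] add_remove_boxes[OF S(1)]
        by blast
    thus "remove_boxes r S \<in> {k. interlaces m k \<and> is_box_extension k r}" using S(2) by simp
  qed
qed

lemma sum_box_extensions_reindex:
  "(\<Sum>k\<in>{k. interlaces m k}. (if is_box_extension k r then \<beta> ^ num_changed_rows k r else 0) * A k)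
    = (\<Sum>S\<in>Pow (removable_rows r).
        if interlaces m (remove_boxes r S) then \<beta> ^ card S * A (remove_boxes r S) else 0)"
proof -
  let ?S = "{S\<in>Pow (removable_rows r). interlaces m (remove_boxes r S)}"
  have inj: "inj_on (remove_boxes r) ?S"
    by (rule inj_on_subset[OF remove_boxes_inj]) auto
  obtain L where "\<forall>i>L. r i = 0" using is_partition_fun_support[OF rP] by blast
  hence fin: "finite (Pow (removable_rows r))"
    using removable_rows_subset finite_subset by (metis finite_Pow_iff finite_atLeastAtMost)
  have "(\<Sum>k\<in>{k. interlaces m k}. (if is_box_extension k r then \<beta> ^ num_changed_rows k r else 0) * A k)
      = (\<Sum>k\<in>{k. interlaces m k}. if is_box_extension k r then \<beta> ^ num_changed_rows k r * A k else 0)"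
    by (intro sum.cong) auto
  also have "\<dots> = (\<Sum>k\<in>{k\<in>{k. interlaces m k}. is_box_extension k r}. \<beta> ^ num_changed_rows k r * A k)"
    by (rule sum.inter_filter[symmetric, OF finite_interlaces[OF mD]])
  also have "{k\<in>{k. interlaces m k}. is_box_extension k r} = remove_boxes r ` ?S"
    using box_extensions_eq_image by simp
  also have "(\<Sum>k\<in>remove_boxes r ` ?S. \<beta> ^ num_changed_rows k r * A k)
      = (\<Sum>S\<in>?S. \<beta> ^ num_changed_rows (remove_boxes r S) r * A (remove_boxes r S))"
    using sum.reindex[OF inj, of "\<lambda>k. \<beta> ^ num_changed_rows k r * A k"] by (simp add: comp_def)
  also have "\<dots> = (\<Sum>S\<in>?S. \<beta> ^ card S * A (remove_boxes r S))"
    using num_changed_rows_remove_boxes by (intro sum.cong) auto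
  also have "\<dots> = (\<Sum>S\<in>Pow (removable_rows r).
      if interlaces m (remove_boxes r S) then \<beta> ^ card S * A (remove_boxes r S) else 0)"
    by (rule sum.inter_filter[OF fin])
  finally show ?thesis .
qed

lemma sum_remove_boxes_eq_prod:
  "(\<Sum>S\<in>Pow (removable_rows r). \<beta> ^ card S *
      (\<Prod>j\<in>{1..Suc e}. ratio_row \<beta> x y (Suc e) m j (remove_boxes r S j)))
    = (\<Prod>j\<in>{1..Suc e}. sigma_row \<beta> x y (Suc e) m r j)"
proof -
  let ?A = "{1..Suc e}" and ?R = "removable_rows r" and ?t = "ratio_row \<beta> x y (Suc e) m"
  have RA: "?R \<subseteq> ?A" using removable_rows_subset[OF rD] by auto
  have "(\<Prod>j\<in>?A. sigma_row \<beta> x y (Suc e) m r j)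
      = (\<Prod>j\<in>?A. (if j \<in> ?R then \<beta> * ?t j (r j - 1) else 0) + ?t j (r j))"
    by (intro prod.cong refl) (simp add: sigma_row_def row_sigma_def ratio_row_def removable_rows_def)
  also have "\<dots> = (\<Sum>S\<in>Pow ?R. (\<Prod>j\<in>S. \<beta> * ?t j (r j - 1)) * (\<Prod>j\<in>?A - S. ?t j (r j)))"
    by (rule prod_add_if_mem[OF finite_atLeastAtMost RA])
  also have "\<dots> = (\<Sum>S\<in>Pow ?R. \<beta> ^ card S * (\<Prod>j\<in>?A. ?t j (remove_boxes r S j)))"
  proof (intro sum.cong refl)
    fix S assume "S \<in> Pow ?R"
    hence SA: "S \<subseteq> ?A" using RA by auto
    have "(\<Prod>j\<in>?A. ?t j (remove_boxes r S j))
        = (\<Prod>j\<in>?A - S. ?t j (remove_boxes r S j)) * (\<Prod>j\<in>S. ?t j (remove_boxes r S j))"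
      by (rule prod.subset_diff[OF SA]) simp
    also have "\<dots> = (\<Prod>j\<in>?A - S. ?t j (r j)) * (\<Prod>j\<in>S. ?t j (r j - 1))"
      by (intro arg_cong2[where f = "(*)"] prod.cong) (auto simp: remove_boxes_def)
    finally show "(\<Prod>j\<in>S. \<beta> * ?t j (r j - 1)) * (\<Prod>j\<in>?A - S. ?t j (r j))
        = \<beta> ^ card S * (\<Prod>j\<in>?A. ?t j (remove_boxes r S j))"
      by (simp add: prod.distrib ac_simps)
  qed
  finally show ?thesis by simp
qed

lemma prod_ratio_row_eq_0:
  assumes k0: "k 0 = 0" and kD: "\<forall>j>e. k j = 0" and nil: "\<not> interlaces m k"
  shows "(\<Prod>j\<in>{1..Suc e}. ratio_row \<beta> x y (Suc e) m j (k j)) = 0"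
proof -
  obtain i where i: "1 \<le> i" "\<not> (m (Suc i) \<le> k i \<and> k i \<le> m i)"
    using nil k0 unfolding interlaces_def by blast
  have "i \<le> Suc e"
  proof (rule ccontr)
    assume "\<not> i \<le> Suc e"
    hence "m (Suc i) = 0" "m i = 0" "k i = 0" using mD kD by auto
    thus False using i by simp
  qed
  moreover have "ratio_row \<beta> x y (Suc e) m i (k i) = 0"
    unfolding ratio_row_def row_ratio_def by (rule if_not_P[OF i(2)])
  ultimately show ?thesis using i by (intro prod_zero) auto
qed

lemma strip_weight_telescope:
  assumes yne: "\<forall>k\<ge>1. 1 + \<beta> * y k \<noteq> 0" and kD: "\<forall>j>e. k j = 0" and il: "interlaces m k"
  shows "(1 + \<beta> * x (Suc e)) * content_factor \<beta> y (Suc e) m * strip_weight \<beta> x y (Suc e) m k /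
      content_factor \<beta> y e k
    = (1 + \<beta> * x (Suc e)) * shifted_y_factor \<beta> y (Suc e) 1 (Suc (m 1)) *
      (\<Prod>j\<in>{1..Suc e}. ratio_row \<beta> x y (Suc e) m j (k j))"
proof -
  let ?Y = "shifted_y_factor \<beta> y (Suc e)"
  let ?w = "\<lambda>i. row_weight \<beta> x y (Suc e) i (m i) (k i) (m (Suc i))"
  let ?t = "\<lambda>i. ratio_row \<beta> x y (Suc e) m i (k i)"
  have ratio: "?Y i (m (Suc i)) * ?w i / ?Y i (k i) = ?t i" if "i \<in> {1..e}" for i
    using that interlacesD(2,3)[OF il, of i] yne
    by (intro row_weight_eq_ratio_row) (auto simp: shifted_y_factor_def)
  have last: "?w (Suc e) = ?t (Suc e)"
    using kD mD by (simp add: row_weight_def ratio_row_def row_ratio_def row_cell_factor_def)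
  have "content_factor \<beta> y (Suc e) m * strip_weight \<beta> x y (Suc e) m k / content_factor \<beta> y e k
      = ?Y 1 (Suc (m 1)) * ((\<Prod>i\<in>{1..e}. ?Y i (m (Suc i))) * (\<Prod>i\<in>{1..e}. ?w i) /
        (\<Prod>i\<in>{1..e}. ?Y i (k i))) * ?w (Suc e)"
    unfolding content_factor_Suc_shifted[OF mD] content_factor_shifted[of \<beta> y e k] strip_weight_def
    by (simp add: ac_simps)
  also have "(\<Prod>i\<in>{1..e}. ?Y i (m (Suc i))) * (\<Prod>i\<in>{1..e}. ?w i) / (\<Prod>i\<in>{1..e}. ?Y i (k i))
      = (\<Prod>i\<in>{1..e}. ?Y i (m (Suc i)) * ?w i / ?Y i (k i))"
    by (simp add: prod.distrib prod_dividef)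
  also have "\<dots> = (\<Prod>i\<in>{1..e}. ?t i)" using ratio by (rule prod.cong[OF refl])
  finally have "content_factor \<beta> y (Suc e) m * strip_weight \<beta> x y (Suc e) m k / content_factor \<beta> y e k
      = ?Y 1 (Suc (m 1)) * (\<Prod>i\<in>{1..Suc e}. ?t i)" unfolding last by (simp add: ac_simps)
  hence "(1 + \<beta> * x (Suc e)) * (content_factor \<beta> y (Suc e) m * strip_weight \<beta> x y (Suc e) m k /
      content_factor \<beta> y e k) = (1 + \<beta> * x (Suc e)) * (?Y 1 (Suc (m 1)) * (\<Prod>i\<in>{1..Suc e}. ?t i))"
    by (rule arg_cong)
  thus ?thesis by (simp only: mult.assoc times_divide_eq_right)
qed

lemma pieri_lhs_coeff_eq_rhs_coeff:
  assumes yne: "\<forall>k\<ge>1. 1 + \<beta> * y k \<noteq> 0"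
  shows "pieri_lhs_coeff \<beta> x y e m r = pieri_rhs_coeff \<beta> x y e m r"
proof -
  let ?A = "\<lambda>k. (1 + \<beta> * x (Suc e)) * content_factor \<beta> y (Suc e) m * strip_weight \<beta> x y (Suc e) m k /
      content_factor \<beta> y e k"
  let ?C = "(1 + \<beta> * x (Suc e)) * shifted_y_factor \<beta> y (Suc e) 1 (Suc (m 1))"
  let ?t = "ratio_row \<beta> x y (Suc e) m"
  have "pieri_lhs_coeff \<beta> x y e m r = (\<Sum>S\<in>Pow (removable_rows r).
      if interlaces m (remove_boxes r S) then \<beta> ^ card S * ?A (remove_boxes r S) else 0)"
    unfolding pieri_lhs_coeff_def by (rule sum_box_extensions_reindex)
  also have "\<dots> = (\<Sum>S\<in>Pow (removable_rows r). \<beta> ^ card S * (?C * (\<Prod>j\<in>{1..Suc e}. ?t j (remove_boxes r S j))))"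
  proof (intro sum.cong refl)
    fix S assume S: "S \<in> Pow (removable_rows r)"
    have k0: "remove_boxes r S 0 = 0"
      using is_partition_fun_0[OF rP] by (simp add: remove_boxes_def)
    have kD: "\<forall>j>e. remove_boxes r S j = 0" using rD by (auto simp: remove_boxes_def)
    show "(if interlaces m (remove_boxes r S) then \<beta> ^ card S * ?A (remove_boxes r S) else 0) =
        \<beta> ^ card S * (?C * (\<Prod>j\<in>{1..Suc e}. ?t j (remove_boxes r S j)))"
      using strip_weight_telescope[OF yne kD] prod_ratio_row_eq_0[OF k0 kD] by auto
  qed
  also have "\<dots> = ?C * (\<Sum>S\<in>Pow (removable_rows r). \<beta> ^ card S * (\<Prod>j\<in>{1..Suc e}. ?t j (remove_boxes r S j)))"
    by (simp add: sum_distrib_left ac_simps)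
  also have "\<dots> = ?C * (\<Prod>j\<in>{1..Suc e}. sigma_row \<beta> x y (Suc e) m r j)"
    unfolding sum_remove_boxes_eq_prod ..
  also have "\<dots> = pieri_rhs_coeff \<beta> x y e m r" by (rule pieri_rhs_coeff_eq[symmetric])
  finally show ?thesis .
qed

end

section \<open>The Pieri rule\<close>

definition x_factor :: "'a::field \<Rightarrow> (nat \<Rightarrow> 'a) \<Rightarrow> nat \<Rightarrow> 'a" where
  "x_factor \<beta> x d = (\<Prod>i\<in>{1..d}. 1 + \<beta> * x i)"

lemma diagram_empty_iff: assumes "is_partition_fun m" shows "diagram m = {} \<longleftrightarrow> m 1 = 0"
proof
  assume "diagram m = {}"
  hence "(1, 1) \<notin> diagram m" by simp
  thus "m 1 = 0" by (simp add: diagram_def)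
next
  assume "m 1 = 0"
  thus "diagram m = {}"
    using is_partition_fun_mono[OF assms, of 1] by (fastforce simp: diagram_def)
qed

lemma addable_rows_empty: assumes "is_partition_fun m" "m 1 = 0" shows "addable_rows m = {1}"
proof -
  have "m i = 0" for i
    using is_partition_fun_mono[OF assms(1), of 1 i] assms(2) is_partition_fun_0[OF assms(1)]
    by (cases i) auto
  thus ?thesis unfolding addable_rows_def by auto
qed

lemma pieri_0:
  assumes m: "is_partition_fun m"
  shows "x_factor \<beta> x 0 * content_factor \<beta> y 0 m * G_on \<beta> 0 (diagram m) x y =
    (\<Sum>T\<in>Pow (addable_rows m). \<beta> ^ card T * G_on \<beta> 0 (diagram (add_boxes m T)) x y)"
proof -
  have nonempty: "diagram (add_boxes m T) \<noteq> {}" if "m 1 \<noteq> 0 \<or> 1 \<in> T" for T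
  proof -
    have "(1, 1) \<in> diagram (add_boxes m T)" using that by (auto simp: diagram_def add_boxes_def)
    thus ?thesis by blast
  qed
  show ?thesis
  proof (cases "m 1 = 0")
    case True
    have "Pow (addable_rows m) = {{}, {1}}" using addable_rows_empty[OF m True] by auto
    moreover have "add_boxes m {} = m" by (simp add: add_boxes_def)
    ultimately show ?thesis using diagram_empty_iff[OF m] True nonempty[of "{1}"]
      by (simp add: G_on_0 x_factor_def content_factor_def)
  next
    case False
    thus ?thesis using diagram_empty_iff[OF m] nonempty by (simp add: G_on_0)
  qed
qed

text \<open>A finite set containing all shapes that occur in the induction step, so that
  coefficients can be compared termwise.\<close>

definition bounded_funs :: "nat \<Rightarrow> nat \<Rightarrow> (nat \<Rightarrow> nat) set" where
  "bounded_funs L N = {r. \<forall>i. r i \<le> (if i \<le> L then N else 0)}"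

lemma finite_bounded_funs: "finite (bounded_funs L N)"
  unfolding bounded_funs_def by (rule finite_pointwise_le_funs[of L]) simp

lemma mem_bounded_funs:
  assumes m: "is_partition_fun m" and r: "r 0 = 0" "\<And>i. r i \<le> Suc (m i)" "\<And>i. L < i \<Longrightarrow> r i = 0"
  shows "r \<in> bounded_funs L (Suc (m 1))"
  unfolding bounded_funs_def
proof (intro CollectI allI)
  fix i
  show "r i \<le> (if i \<le> L then Suc (m 1) else 0)"
  proof (cases "i = 0")
    case False
    thus ?thesis using r(2)[of i] r(3)[of i] is_partition_fun_mono[OF m, of 1 i] by auto
  qed (use r in simp)
qed

lemma sum_add_boxes_bounded:
  fixes \<beta> :: "'a::field" and h :: "(nat \<Rightarrow> nat) \<Rightarrow> 'a"
  assumes k: "is_partition_fun k" and km: "interlaces m k" and m: "is_partition_fun m"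
    and mD: "\<forall>i>Suc e. m i = 0"
  shows "(\<Sum>T\<in>Pow (addable_rows k). \<beta> ^ card T * h (add_boxes k T)) =
     (\<Sum>r\<in>bounded_funs (Suc (Suc e)) (Suc (m 1)).
        (if is_box_extension k r then \<beta> ^ num_changed_rows k r else 0) * h r)"
proof -
  let ?B = "bounded_funs (Suc (Suc e)) (Suc (m 1))"
  have kD: "\<forall>i>Suc e. k i = 0" using mD interlaces_le[OF km] by (metis le_zero_eq)
  have img: "add_boxes k ` Pow (addable_rows k) \<subseteq> ?B"
  proof (rule image_subsetI)
    fix T assume "T \<in> Pow (addable_rows k)"
    hence T: "T \<subseteq> addable_rows k" by simp
    show "add_boxes k T \<in> ?B"
    proof (rule mem_bounded_funs[OF m])
      show "add_boxes k T 0 = 0"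
        using T is_partition_fun_0[OF k] by (auto simp: add_boxes_def addable_rows_def)
      show "add_boxes k T i \<le> Suc (m i)" for i
        using interlaces_le[OF km, of i] by (simp add: add_boxes_def)
      show "add_boxes k T i = 0" if "Suc (Suc e) < i" for i
        using that kD addable_rows_subset[OF kD] T by (auto simp: add_boxes_def)
    qed
  qed
  have "(\<Sum>r\<in>?B. (if is_box_extension k r then \<beta> ^ num_changed_rows k r else 0) * h r)
      = (\<Sum>r\<in>?B. if is_box_extension k r then \<beta> ^ num_changed_rows k r * h r else 0)"
    by (intro sum.cong) auto
  also have "\<dots> = (\<Sum>r\<in>{r\<in>?B. is_box_extension k r}. \<beta> ^ num_changed_rows k r * h r)"
    by (rule sum.inter_filter[symmetric, OF finite_bounded_funs])
  also have "{r\<in>?B. is_box_extension k r} = add_boxes k ` Pow (addable_rows k)"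
    using img unfolding is_box_extension_def by auto
  also have "(\<Sum>r\<in>add_boxes k ` Pow (addable_rows k). \<beta> ^ num_changed_rows k r * h r)
      = (\<Sum>T\<in>Pow (addable_rows k). \<beta> ^ card T * h (add_boxes k T))"
    by (simp add: sum.reindex[OF add_boxes_inj] num_changed_rows_add_boxes)
  finally show ?thesis by simp
qed

lemma interlaces_subset_bounded_funs:
  assumes m: "is_partition_fun m" and mD: "\<forall>i>Suc e. m i = 0" and T: "T \<subseteq> {1..Suc e}"
  shows "{r. interlaces (add_boxes m T) r} \<subseteq> bounded_funs (Suc (Suc e)) (Suc (m 1))"
proof
  fix r assume "r \<in> {r. interlaces (add_boxes m T) r}"
  hence il: "interlaces (add_boxes m T) r" by simp
  show "r \<in> bounded_funs (Suc (Suc e)) (Suc (m 1))"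
  proof (rule mem_bounded_funs[OF m])
    show "r 0 = 0" using interlacesD(1)[OF il] .
    show "r i \<le> Suc (m i)" for i
      using interlaces_le[OF il, of i] by (simp add: add_boxes_def split: if_splits)
    show "r i = 0" if "Suc (Suc e) < i" for i
    proof -
      have "i \<notin> T" "m i = 0" using that T mD by auto
      thus ?thesis using interlaces_le[OF il, of i] by (simp add: add_boxes_def)
    qed
  qed
qed

lemma content_factor_nonzero:
  fixes \<beta> :: "'a::field"
  assumes "\<forall>k\<ge>1. 1 + \<beta> * y k \<noteq> 0"
  shows "content_factor \<beta> y e k \<noteq> 0"
  unfolding content_factor_def using assms by (subst prod_zero_iff) auto

lemma pieri_lhs_expand:
  fixes \<beta> :: "'a::field"
  assumes yne: "\<forall>k\<ge>1. 1 + \<beta> * y k \<noteq> 0"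
    and IH: "\<And>k. is_partition_fun k \<Longrightarrow> x_factor \<beta> x e * content_factor \<beta> y e k * G_on \<beta> e (diagram k) x y
       = (\<Sum>T\<in>Pow (addable_rows k). \<beta> ^ card T * G_on \<beta> e (diagram (add_boxes k T)) x y)"
    and m: "is_partition_fun m" and mD: "\<forall>i>Suc e. m i = 0"
  shows "x_factor \<beta> x (Suc e) * content_factor \<beta> y (Suc e) m * G_on \<beta> (Suc e) (diagram m) x y
    = (\<Sum>r\<in>bounded_funs (Suc (Suc e)) (Suc (m 1)). G_on \<beta> e (diagram r) x y * pieri_lhs_coeff \<beta> x y e m r)"
proof -
  let ?G = "\<lambda>r. G_on \<beta> e (diagram r) x y"
  let ?B = "bounded_funs (Suc (Suc e)) (Suc (m 1))"
  let ?A = "\<lambda>k. (1 + \<beta> * x (Suc e)) * content_factor \<beta> y (Suc e) m * strip_weight \<beta> x y (Suc e) m k /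
    content_factor \<beta> y e k"
  have "x_factor \<beta> x (Suc e) * content_factor \<beta> y (Suc e) m * G_on \<beta> (Suc e) (diagram m) x y
      = (\<Sum>k\<in>{k. interlaces m k}. ?A k * (x_factor \<beta> x e * content_factor \<beta> y e k * ?G k))"
    unfolding G_on_diagram_branching[OF m mD] strip_weight_def[symmetric] sum_distrib_left
    using content_factor_nonzero[OF yne]
      by (intro sum.cong refl) (simp add: x_factor_def field_simps)
  also have "\<dots> = (\<Sum>k\<in>{k. interlaces m k}. ?A k * (\<Sum>r\<in>?B.
      (if is_box_extension k r then \<beta> ^ num_changed_rows k r else 0) * ?G r))"
  proof (intro sum.cong refl)
    fix k assume "k \<in> {k. interlaces m k}"
    hence km: "interlaces m k" by simp
    have k: "is_partition_fun k" using is_partition_fun_interlaces[OF km mD] .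
    show "?A k * (x_factor \<beta> x e * content_factor \<beta> y e k * ?G k) = ?A k * (\<Sum>r\<in>?B.
        (if is_box_extension k r then \<beta> ^ num_changed_rows k r else 0) * ?G r)"
      unfolding IH[OF k] sum_add_boxes_bounded[OF k km m mD, of \<beta> ?G] ..
  qed
  also have "\<dots> = (\<Sum>r\<in>?B. ?G r * pieri_lhs_coeff \<beta> x y e m r)"
    unfolding pieri_lhs_coeff_def sum_distrib_left sum_distrib_right
    by (subst sum.swap) (simp add: ac_simps)
  finally show ?thesis .
qed

lemma G_on_add_boxes_beyond:
  assumes m: "is_partition_fun m" and T: "T \<subseteq> addable_rows m" "\<not> T \<subseteq> {1..d}"
  shows "G_on \<beta> d (diagram (add_boxes m T)) x y = 0"
proof -
  obtain i where i: "i \<in> T" "i \<notin> {1..d}" using T by blast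
  hence "d < i" using T(1) by (auto simp: addable_rows_def)
  moreover have "add_boxes m T i \<noteq> 0" using i by (simp add: add_boxes_def)
  ultimately show ?thesis using G_on_long_column is_partition_fun_add_boxes[OF m T(1)] by blast
qed

lemma pieri_rhs_expand:
  fixes \<beta> :: "'a::field"
  assumes m: "is_partition_fun m" and mD: "\<forall>i>Suc e. m i = 0"
  shows "(\<Sum>T\<in>Pow (addable_rows m). \<beta> ^ card T * G_on \<beta> (Suc e) (diagram (add_boxes m T)) x y)
    = (\<Sum>r\<in>bounded_funs (Suc (Suc e)) (Suc (m 1)). G_on \<beta> e (diagram r) x y * pieri_rhs_coeff \<beta> x y e m r)"
proof -
  let ?G = "\<lambda>r. G_on \<beta> e (diagram r) x y"
  let ?B = "bounded_funs (Suc (Suc e)) (Suc (m 1))"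
  let ?A = "addable_rows m \<inter> {1..Suc e}"
  have "(\<Sum>T\<in>Pow (addable_rows m). \<beta> ^ card T * G_on \<beta> (Suc e) (diagram (add_boxes m T)) x y)
      = (\<Sum>T\<in>Pow ?A. \<beta> ^ card T * G_on \<beta> (Suc e) (diagram (add_boxes m T)) x y)"
  proof (rule sum.mono_neutral_right)
    show "finite (Pow (addable_rows m))" using finite_addable_rows[OF m] by simp
    show "\<forall>T\<in>Pow (addable_rows m) - Pow ?A. \<beta> ^ card T * G_on \<beta> (Suc e) (diagram (add_boxes m T)) x y = 0"
    proof
      fix T assume "T \<in> Pow (addable_rows m) - Pow ?A"
      hence "T \<subseteq> addable_rows m" "\<not> T \<subseteq> {1..Suc e}" by auto
      hence "G_on \<beta> (Suc e) (diagram (add_boxes m T)) x y = 0" by (rule G_on_add_boxes_beyond[OF m])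
      thus "\<beta> ^ card T * G_on \<beta> (Suc e) (diagram (add_boxes m T)) x y = 0" by simp
    qed
  qed auto
  also have "\<dots> = (\<Sum>T\<in>Pow ?A. \<beta> ^ card T * (\<Sum>r\<in>?B. (if interlaces (add_boxes m T) r
      then strip_weight \<beta> x y (Suc e) (add_boxes m T) r else 0) * ?G r))"
  proof (intro sum.cong refl arg_cong2[where f = "(*)"])
    fix T assume T: "T \<in> Pow ?A"
    let ?n = "add_boxes m T"
    have n: "is_partition_fun ?n" using is_partition_fun_add_boxes[OF m] T by auto
    have nD: "\<forall>i>Suc e. ?n i = 0" using mD T by (auto simp: add_boxes_def)
    have "G_on \<beta> (Suc e) (diagram ?n) x y = (\<Sum>r\<in>{r\<in>?B. interlaces ?n r}. ?G r * strip_weight \<beta> x y (Suc e) ?n r)"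
      unfolding G_on_diagram_branching[OF n nD] strip_weight_def[symmetric]
      using interlaces_subset_bounded_funs[OF m mD, of T] T by (intro sum.cong) auto
    also have "\<dots> = (\<Sum>r\<in>?B. if interlaces ?n r then ?G r * strip_weight \<beta> x y (Suc e) ?n r else 0)"
      by (rule sum.inter_filter[OF finite_bounded_funs])
    also have "\<dots> = (\<Sum>r\<in>?B. (if interlaces ?n r then strip_weight \<beta> x y (Suc e) ?n r else 0) * ?G r)"
      by (intro sum.cong) auto
    finally show "G_on \<beta> (Suc e) (diagram ?n) x y =
        (\<Sum>r\<in>?B. (if interlaces ?n r then strip_weight \<beta> x y (Suc e) ?n r else 0) * ?G r)" .
  qed
  also have "\<dots> = (\<Sum>r\<in>?B. ?G r * pieri_rhs_coeff \<beta> x y e m r)"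
    unfolding pieri_rhs_coeff_def sum_distrib_left sum_distrib_right
    by (subst sum.swap) (simp add: ac_simps)
  finally show ?thesis .
qed

lemma pieri_coeffs_agree:
  fixes \<beta> :: "'a::field"
  assumes yne: "\<forall>k\<ge>1. 1 + \<beta> * y k \<noteq> 0" and m: "is_partition_fun m" and mD: "\<forall>i>Suc e. m i = 0"
  shows "G_on \<beta> e (diagram r) x y * pieri_lhs_coeff \<beta> x y e m r =
    G_on \<beta> e (diagram r) x y * pieri_rhs_coeff \<beta> x y e m r"
proof (cases "is_partition_fun r")
  case r: True
  show ?thesis
  proof (cases "\<forall>i>e. r i = 0")
    case True
    thus ?thesis using pieri_lhs_coeff_eq_rhs_coeff[OF m mD r True yne] by simp
  next
    case False
    then obtain i where "e < i" "r i \<noteq> 0" by auto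
    hence "G_on \<beta> e (diagram r) x y = 0" by (rule G_on_long_column[OF r])
    thus ?thesis by simp
  qed
next
  case False
  \<comment> \<open>then \<open>r\<close> is neither a box extension of a partition nor interlaces one\<close>
  have "pieri_lhs_coeff \<beta> x y e m r = 0"
  proof (unfold pieri_lhs_coeff_def, intro sum.neutral ballI)
    fix k assume "k \<in> {k. interlaces m k}"
    hence "is_partition_fun k" using is_partition_fun_interlaces[OF _ mD] by blast
    hence "\<not> is_box_extension k r"
      using False is_partition_fun_add_boxes unfolding is_box_extension_def by blast
    thus "(if is_box_extension k r then \<beta> ^ num_changed_rows k r else 0) *
      ((1 + \<beta> * x (Suc e)) * content_factor \<beta> y (Suc e) m * strip_weight \<beta> x y (Suc e) m k /
        content_factor \<beta> y e k) = 0" by simp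
  qed
  moreover have "pieri_rhs_coeff \<beta> x y e m r = 0"
  proof (unfold pieri_rhs_coeff_def, intro sum.neutral ballI)
    fix T assume "T \<in> Pow (addable_rows m \<inter> {1..Suc e})"
    hence "\<forall>i>Suc e. add_boxes m T i = 0" using mD by (auto simp: add_boxes_def)
    hence "\<not> interlaces (add_boxes m T) r" using is_partition_fun_interlaces False by blast
    thus "\<beta> ^ card T * (if interlaces (add_boxes m T) r
        then strip_weight \<beta> x y (Suc e) (add_boxes m T) r else 0) = 0" by simp
  qed
  ultimately show ?thesis by simp
qed

theorem grothendieck_pieri:
  fixes \<beta> :: "'a::field"
  assumes yne: "\<forall>k\<ge>1. 1 + \<beta> * y k \<noteq> 0" and m: "is_partition_fun m"
  shows "x_factor \<beta> x d * content_factor \<beta> y d m * G_on \<beta> d (diagram m) x y =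
       (\<Sum>T\<in>Pow (addable_rows m). \<beta> ^ card T * G_on \<beta> d (diagram (add_boxes m T)) x y)"
  using m
proof (induction d arbitrary: m)
  case 0 thus ?case by (rule pieri_0)
next
  case (Suc e)
  show ?case
  proof (cases "\<forall>i>Suc e. m i = 0")
    case mD: True
    have "x_factor \<beta> x (Suc e) * content_factor \<beta> y (Suc e) m * G_on \<beta> (Suc e) (diagram m) x y
        = (\<Sum>r\<in>bounded_funs (Suc (Suc e)) (Suc (m 1)). G_on \<beta> e (diagram r) x y * pieri_lhs_coeff \<beta> x y e m r)"
      by (rule pieri_lhs_expand[OF yne Suc.IH Suc.prems mD])
    also have "\<dots> = (\<Sum>r\<in>bounded_funs (Suc (Suc e)) (Suc (m 1)).
        G_on \<beta> e (diagram r) x y * pieri_rhs_coeff \<beta> x y e m r)"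
      using pieri_coeffs_agree[OF yne Suc.prems mD] by (rule sum.cong[OF refl])
    finally show ?thesis unfolding pieri_rhs_expand[OF Suc.prems mD] .
  next
    case False
    then obtain i where i: "Suc e < i" "m i \<noteq> 0" by auto
    have "G_on \<beta> (Suc e) (diagram (add_boxes m T)) x y = 0" if "T \<subseteq> addable_rows m" for T
      using G_on_long_column[OF is_partition_fun_add_boxes[OF Suc.prems that] i(1)] i(2)
      by (simp add: add_boxes_def)
    moreover have "G_on \<beta> (Suc e) (diagram m) x y = 0" by (rule G_on_long_column[OF Suc.prems i])
    ultimately show ?thesis by simp
  qed
qed

section \<open>Lists of parts and the covering relation\<close>

lemma diagram_add_boxes:
  assumes T: "T \<subseteq> addable_rows m"
  shows "diagram (add_boxes m T) = diagram m \<union> (\<lambda>i. (i, Suc (m i))) ` T"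
proof (rule set_eqI, rule iffI)
  fix u assume "u \<in> diagram (add_boxes m T)"
  then obtain i j where u: "u = (i, j)" "1 \<le> i" "1 \<le> j" "j \<le> m i + (if i \<in> T then 1 else 0)"
    by (auto simp: diagram_def add_boxes_def)
  show "u \<in> diagram m \<union> (\<lambda>i. (i, Suc (m i))) ` T"
  proof (cases "j \<le> m i")
    case False
    hence "i \<in> T" "j = Suc (m i)" using u by (auto split: if_splits)
    thus ?thesis using u by auto
  qed (use u in \<open>auto simp: diagram_def\<close>)
next
  fix u assume "u \<in> diagram m \<union> (\<lambda>i. (i, Suc (m i))) ` T"
  thus "u \<in> diagram (add_boxes m T)"
    using T by (auto simp: diagram_def add_boxes_def addable_rows_def)
qed

lemma card_diagram_add_boxes:
  assumes m: "is_partition_fun m" and T: "T \<subseteq> addable_rows m"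
  shows "card (diagram (add_boxes m T)) = card (diagram m) + card T"
proof -
  obtain L where L: "\<forall>i>L. m i = 0" using is_partition_fun_support[OF m] by blast
  have "finite T" using finite_addable_rows[OF m] T finite_subset by blast
  moreover have "diagram m \<inter> (\<lambda>i. (i, Suc (m i))) ` T = {}" by (auto simp: diagram_def)
  moreover have "inj_on (\<lambda>i. (i, Suc (m i))) T" by (auto simp: inj_on_def)
  ultimately show ?thesis
    unfolding diagram_add_boxes[OF T]
      using finite_diagram[OF L] by (simp add: card_Un_disjoint card_image)
qed

lemma addable_rows_less:
  assumes m: "is_partition_fun m" and ab: "a \<in> addable_rows m" "b \<in> addable_rows m" "a < b"
  shows "m b < m a"
proof -
  have a1: "1 \<le> a" using ab by (simp add: addable_rows_def)
  hence "m b < m (b - 1)" using ab by (simp add: addable_rows_def)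
  moreover have "m (b - 1) \<le> m a" using is_partition_fun_mono[OF m a1, of "b - 1"] ab by simp
  ultimately show ?thesis by simp
qed

lemma diagram_subset_imp_le:
  assumes "m 0 = 0" "diagram m \<subseteq> diagram n" shows "m i \<le> n i"
proof (cases "1 \<le> i \<and> 1 \<le> m i")
  case True
  hence "(i, m i) \<in> diagram n" using assms(2) by (auto simp: diagram_def)
  thus ?thesis by (simp add: diagram_def)
qed (use assms(1) in \<open>cases i; auto\<close>)

lemma strip_imp_add_boxes:
  assumes m: "is_partition_fun m" and n: "is_partition_fun n" and sub: "diagram m \<subseteq> diagram n"
    and D: "\<And>u v. u \<in> diagram n - diagram m \<Longrightarrow> v \<in> diagram n - diagram m \<Longrightarrow> u \<noteq> v \<Longrightarrow>
      fst u \<noteq> fst v \<and> snd u \<noteq> snd v"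
  shows "n = add_boxes m {i. n i \<noteq> m i}" "{i. n i \<noteq> m i} \<subseteq> addable_rows m"
proof -
  have le: "m i \<le> n i" for i using diagram_subset_imp_le[OF is_partition_fun_0[OF m] sub] .
  have le1: "n i \<le> Suc (m i)" for i
  proof (rule ccontr)
    assume "\<not> n i \<le> Suc (m i)"
    moreover have "1 \<le> i" using calculation is_partition_fun_0[OF n] by (cases i) auto
    ultimately have "(i, Suc (m i)) \<in> diagram n - diagram m" "(i, Suc (Suc (m i))) \<in> diagram n - diagram m"
      by (auto simp: diagram_def)
    thus False using D by fastforce
  qed
  show "n = add_boxes m {i. n i \<noteq> m i}"
  proof
    fix i show "n i = add_boxes m {i. n i \<noteq> m i} i"
      using le[of i] le1[of i] by (auto simp: add_boxes_def)
  qed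
  show "{i. n i \<noteq> m i} \<subseteq> addable_rows m"
  proof
    fix i assume "i \<in> {i. n i \<noteq> m i}"
    hence ni: "n i = Suc (m i)" using le[of i] le1[of i] by simp
    have i1: "1 \<le> i" using ni is_partition_fun_0[OF m] is_partition_fun_0[OF n] by (cases i) auto
    show "i \<in> addable_rows m"
    proof (rule ccontr)
      assume "i \<notin> addable_rows m"
      hence i2: "2 \<le> i" and meq: "m i = m (i - 1)"
        using i1 is_partition_fun_mono[OF m, of "i - 1" i] by (auto simp: addable_rows_def)
      have "n i \<le> n (i - 1)" using is_partition_fun_mono[OF n, of "i - 1" i] i2 by simp
      hence "n (i - 1) = Suc (m (i - 1))" using ni meq le1[of "i - 1"] by simp
      hence "(i - 1, Suc (m i)) \<in> diagram n - diagram m" "(i, Suc (m i)) \<in> diagram n - diagram m"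
        using ni meq i2 by (auto simp: diagram_def)
      thus False using D i2 by fastforce
    qed
  qed
qed

lemma cells_eq_diagram: "cells la = diagram (part la)"
  unfolding cells_def diagram_def part_def by (auto split: if_splits)

lemma card_cells: "card (cells la) = sum_list la"
proof -
  have "cells la = Sigma {1..length la} (\<lambda>i. {1..part la i})"
    unfolding cells_def by auto
  hence "card (cells la) = (\<Sum>i\<in>{1..length la}. part la i)"
    by (simp add: card_SigmaI)
  also have "\<dots> = (\<Sum>i\<in>{1..length la}. la ! (i - 1))"
    by (intro sum.cong refl) (auto simp: part_def)
  also have "\<dots> = (\<Sum>i<length la. la ! i)"
  proof -
    have "(\<Sum>i<length la. la ! i) = (\<Sum>i\<in>{1..length la}. la ! (i - 1))"
      by (rule sum.reindex_bij_witness[where i="\<lambda>i. i - 1" and j="\<lambda>i. Suc i"]) auto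
    thus ?thesis by simp
  qed
  also have "\<dots> = sum_list la" by (simp add: sum_list_sum_nth atLeast0LessThan)
  finally show ?thesis .
qed

lemma G_eq_G_on: "G \<beta> d la x y = G_on \<beta> d (diagram (part la)) x y"
proof -
  have "G \<beta> d la x y = G_on \<beta> d (cells la) x y"
    unfolding G_def G_on_def tableau_weight_def cell_factor_def SSVT_def ssvt_on_def ne_def psize_def
      card_cells ..
  thus ?thesis unfolding cells_eq_diagram .
qed

lemma psize_eq_card_diagram: "psize la = card (diagram (part la))"
  unfolding psize_def card_cells[symmetric] cells_eq_diagram ..

lemma is_partition_fun_part:
  assumes "is_partition la" shows "is_partition_fun (part la)"
  unfolding is_partition_fun_def
proof (intro conjI allI impI)
  show "part la 0 = 0" by (simp add: part_def)
  show "\<exists>L. \<forall>i>L. part la i = 0" by (rule exI[of _ "length la"]) (simp add: part_def)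
  fix i j :: nat assume ij: "1 \<le> i" "i \<le> j"
  show "part la j \<le> part la i"
  proof (cases "j \<le> length la")
    case True
    have s: "sorted_wrt (\<ge>) la" using assms by (simp add: is_partition_def)
    show ?thesis
    proof (cases "i = j")
      case False
      hence "i - 1 < j - 1" using ij by simp
      moreover have "j - 1 < length la" using True ij by simp
      ultimately have "la ! (j - 1) \<le> la ! (i - 1)" using s by (simp add: sorted_wrt_iff_nth_less)
      thus ?thesis using True ij by (simp add: part_def)
    qed simp
  next
    case False thus ?thesis by (simp add: part_def)
  qed
qed

lemma part_pos: "is_partition la \<Longrightarrow> 1 \<le> i \<Longrightarrow> i \<le> length la \<Longrightarrow> 0 < part la i"
  unfolding is_partition_def part_def by (auto simp: in_set_conv_nth)

lemma part_inj:
  assumes "is_partition l1" "is_partition l2" "part l1 = part l2"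
  shows "l1 = l2"
proof -
  have len: "length l1 = length l2"
  proof (rule ccontr)
    assume ne: "length l1 \<noteq> length l2"
    show False
    proof (cases "length l1 < length l2")
      case True
      hence "0 < part l2 (length l2)" using part_pos[OF assms(2)] by simp
      moreover have "part l1 (length l2) = 0" using True by (simp add: part_def)
      ultimately show False using assms(3) by simp
    next
      case False
      hence "length l2 < length l1" using ne by simp
      hence "0 < part l1 (length l1)" using part_pos[OF assms(1)] by simp
      moreover have "part l2 (length l1) = 0" using \<open>length l2 < length l1\<close> by (simp add: part_def)
      ultimately show False using assms(3) by simp
    qed
  qed
  show ?thesis
  proof (rule nth_equalityI[OF len])
    fix i assume i: "i < length l1"
    have "part l1 (Suc i) = part l2 (Suc i)" using assms(3) by simp
    thus "l1 ! i = l2 ! i" using i len by (simp add: part_def)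
  qed
qed

lemma nonzero_parts_eq_atLeastAtMost:
  assumes f: "is_partition_fun f"
  shows "{i. 1 \<le> i \<and> 0 < f i} = {1..card {i. 1 \<le> i \<and> 0 < f i}}"
proof (rule eq_atLeastAtMost_card)
  obtain L where L: "\<forall>i>L. f i = 0" using is_partition_fun_support[OF f] by blast
  have "{i. 1 \<le> i \<and> 0 < f i} \<subseteq> {1..L}"
  proof
    fix i assume i: "i \<in> {i. 1 \<le> i \<and> 0 < f i}"
    hence "i \<le> L" using L by (metis mem_Collect_eq not_le less_irrefl)
    thus "i \<in> {1..L}" using i by simp
  qed
  thus "finite {i. 1 \<le> i \<and> 0 < f i}" using finite_subset by blast
  fix j j' assume a: "j \<in> {i. 1 \<le> i \<and> 0 < f i}" "1 \<le> j'" "j' \<le> j"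
  have "f j \<le> f j'" using is_partition_fun_mono[OF f a(2,3)] .
  thus "j' \<in> {i. 1 \<le> i \<and> 0 < f i}" using a by auto
qed simp

lemma is_partition_fun_eq_part:
  assumes f: "is_partition_fun f" shows "\<exists>nu. is_partition nu \<and> part nu = f"
proof -
  define l where "l = card {i. 1 \<le> i \<and> 0 < f i}"
  have pos: "0 < f i \<longleftrightarrow> 1 \<le> i \<and> i \<le> l" for i
  proof -
    have "0 < f i \<longleftrightarrow> i \<in> {i. 1 \<le> i \<and> 0 < f i}" using is_partition_fun_0[OF f] by (cases i) auto
    also have "\<dots> \<longleftrightarrow> 1 \<le> i \<and> i \<le> l"
      by (subst nonzero_parts_eq_atLeastAtMost[OF f]) (simp add: l_def)
    finally show ?thesis .
  qed
  define nu where "nu = map f [1..<Suc l]"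
  have len: "length nu = l" by (simp add: nu_def)
  have nth: "nu ! k = f (Suc k)" if "k < l" for k
    using that by (simp add: nu_def nth_map del: upt_Suc)
  have "part nu = f"
  proof
    fix i show "part nu i = f i"
      using pos[of i] nth[of "i - 1"] len by (cases "1 \<le> i \<and> i \<le> l") (auto simp: part_def)
  qed
  moreover have "is_partition nu"
    unfolding is_partition_def sorted_wrt_iff_nth_less
  proof (intro conjI allI impI ballI)
    fix i j assume "i < j" "j < length nu"
    thus "nu ! j \<le> nu ! i" using nth len is_partition_fun_mono[OF f, of "Suc i" "Suc j"] by simp
  next
    fix p assume "p \<in> set nu"
    thus "0 < p" using nth len pos by (auto simp: in_set_conv_nth)
  qed
  ultimately show ?thesis by blast
qed


lemma covers_imp_add_boxes:
  assumes mu: "is_partition mu" and c: "covers nu mu"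
  shows "\<exists>T. T \<subseteq> addable_rows (part mu) \<and> T \<noteq> {} \<and> part nu = add_boxes (part mu) T"
proof -
  let ?m = "part mu" and ?n = "part nu"
  have nu: "is_partition nu" using c by (simp add: covers_def)
  have m: "is_partition_fun ?m" and n: "is_partition_fun ?n"
    using is_partition_fun_part mu nu by auto
  have sub: "diagram ?m \<subseteq> diagram ?n" using c by (simp add: covers_def cells_eq_diagram)
  have D: "\<And>u v. u \<in> diagram ?n - diagram ?m \<Longrightarrow> v \<in> diagram ?n - diagram ?m \<Longrightarrow> u \<noteq> v \<Longrightarrow>
      fst u \<noteq> fst v \<and> snd u \<noteq> snd v"
    using c unfolding covers_def cells_eq_diagram by blast
  note strip = strip_imp_add_boxes[OF m n sub D]
  have "{i. ?n i \<noteq> ?m i} \<noteq> {}"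
  proof
    assume "{i. ?n i \<noteq> ?m i} = {}"
    hence "nu = mu" using part_inj[OF nu mu] by auto
    thus False using c by (simp add: covers_def)
  qed
  thus ?thesis using strip by blast
qed

lemma add_boxes_imp_covers:
  assumes mu: "is_partition mu" and nu: "is_partition nu"
    and T: "T \<subseteq> addable_rows (part mu)" "T \<noteq> {}" and eq: "part nu = add_boxes (part mu) T"
  shows "covers nu mu"
proof -
  let ?m = "part mu"
  have m: "is_partition_fun ?m" using is_partition_fun_part mu by auto
  have sub: "cells mu \<subseteq> cells nu" unfolding cells_eq_diagram eq diagram_add_boxes[OF T(1)] by blast
  have ne: "nu \<noteq> mu"
  proof
    assume "nu = mu"
    obtain i where "i \<in> T" using T(2) by blast
    hence "part nu i \<noteq> part mu i" using eq by (simp add: add_boxes_def)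
    thus False using \<open>nu = mu\<close> by simp
  qed
  have diff: "cells nu - cells mu = (\<lambda>i. (i, Suc (?m i))) ` T"
    unfolding cells_eq_diagram eq diagram_add_boxes[OF T(1)] by (auto simp: diagram_def)
  have cols: "?m i \<noteq> ?m i'" if "i \<in> T" "i' \<in> T" "i \<noteq> i'" for i i'
  proof (cases "i < i'")
    case True thus ?thesis using addable_rows_less[OF m] T(1) that by (metis less_irrefl subsetD)
  next
    case False
    hence "i' < i" using that by simp
    thus ?thesis using addable_rows_less[OF m] T(1) that by (metis less_irrefl subsetD)
  qed
  have "\<forall>u\<in>cells nu - cells mu. \<forall>v\<in>cells nu - cells mu. u \<noteq> v \<longrightarrow> fst u \<noteq> fst v \<and> snd u \<noteq> snd v"
    unfolding diff using cols by auto
  thus ?thesis unfolding covers_def using nu sub ne by blast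
qed

lemma part_covers_image:
  assumes mu: "is_partition mu"
  shows "part ` {nu. covers nu mu} = add_boxes (part mu) ` (Pow (addable_rows (part mu)) - {{}})"
proof
  show "part ` {nu. covers nu mu} \<subseteq> add_boxes (part mu) ` (Pow (addable_rows (part mu)) - {{}})"
    using covers_imp_add_boxes[OF mu] by fastforce
  show "add_boxes (part mu) ` (Pow (addable_rows (part mu)) - {{}}) \<subseteq> part ` {nu. covers nu mu}"
  proof
    fix f assume "f \<in> add_boxes (part mu) ` (Pow (addable_rows (part mu)) - {{}})"
    then obtain T where T: "T \<subseteq> addable_rows (part mu)" "T \<noteq> {}" "f = add_boxes (part mu) T" by auto
    have "is_partition_fun f"
      using is_partition_fun_add_boxes[OF is_partition_fun_part[OF mu] T(1)] T(3) by simp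
    then obtain nu where nu: "is_partition nu" "part nu = f" using is_partition_fun_eq_part by blast
    have "covers nu mu" using add_boxes_imp_covers[OF mu nu(1) T(1) T(2)] nu(2) T(3) by simp
    thus "f \<in> part ` {nu. covers nu mu}" using nu(2) by blast
  qed
qed

lemma sum_covers_eq_sum_add_boxes:
  assumes mu: "is_partition mu"
  shows "(\<Sum>nu\<in>{nu. covers nu mu}. \<beta> ^ (psize nu - psize mu) * G \<beta> d nu x y)
    = (\<Sum>T\<in>Pow (addable_rows (part mu)) - {{}}. \<beta> ^ card T * G_on \<beta> d (diagram (add_boxes (part mu) T)) x y)"
proof -
  let ?m = "part mu"
  let ?h = "\<lambda>f. \<beta> ^ (card (diagram f) - card (diagram ?m)) * G_on \<beta> d (diagram f) x y"
  have "(\<Sum>nu\<in>{nu. covers nu mu}. \<beta> ^ (psize nu - psize mu) * G \<beta> d nu x y)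
      = (\<Sum>nu\<in>{nu. covers nu mu}. ?h (part nu))"
    by (simp add: psize_eq_card_diagram G_eq_G_on)
  also have "\<dots> = (\<Sum>f\<in>part ` {nu. covers nu mu}. ?h f)"
  proof -
    have inj: "inj_on part {nu. covers nu mu}"
      by (rule inj_onI) (auto simp: covers_def intro: part_inj)
    show ?thesis using sum.reindex[OF inj, of ?h] by (simp add: comp_def)
  qed
  also have "\<dots> = (\<Sum>T\<in>Pow (addable_rows ?m) - {{}}. ?h (add_boxes ?m T))"
    unfolding part_covers_image[OF mu]
    using sum.reindex[OF add_boxes_inj, of ?h ?m "Pow (addable_rows ?m) - {{}}"]
      by (simp add: comp_def)
  also have "\<dots> = (\<Sum>T\<in>Pow (addable_rows ?m) - {{}}. \<beta> ^ card T * G_on \<beta> d (diagram (add_boxes ?m T)) x y)"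
    using card_diagram_add_boxes[OF is_partition_fun_part[OF mu]] by (intro sum.cong refl) auto
  finally show ?thesis .
qed

lemma one_plus_gneg:
  fixes \<beta> v :: "'a::field"
  assumes "1 + \<beta> * v \<noteq> 0"
  shows "1 + \<beta> * gneg \<beta> v = 1 / (1 + \<beta> * v)"
  using assms by (simp add: gneg_def gominus_def field_simps)

lemma wt_eq:
  fixes \<beta> :: "'a::field"
  assumes yne: "\<forall>k\<ge>1. 1 + \<beta> * y k \<noteq> 0"
  shows "wt \<beta> d y la mu = x_factor \<beta> (ypt \<beta> d y la) d * content_factor \<beta> y d (part mu)"
  unfolding wt_def x_factor_def content_factor_def prod.distrib[symmetric]
  using yne by (intro prod.cong refl) (simp add: ypt_def one_plus_gneg)

theorem proposition4p1:
  fixes \<beta> :: "'a::field" and y :: "nat \<Rightarrow> 'a" and d :: nat and mu la :: "nat list"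
  assumes "d \<ge> 1"
    and "is_partition mu" and "is_partition la"
    and "length mu \<le> d" and "length la \<le> d"
    and "\<forall>k\<ge>1. 1 + \<beta> * y k \<noteq> 0"
  shows "G \<beta> d mu (ypt \<beta> d y la) y * (wt \<beta> d y la mu - 1)
       = (\<Sum>nu\<in>{nu. covers nu mu}. \<beta> ^ (psize nu - psize mu) * G \<beta> d nu (ypt \<beta> d y la) y)"
proof -
  note mu = assms(2) and yne = assms(6)
  let ?x = "ypt \<beta> d y la" and ?m = "part mu"
  let ?G = "\<lambda>T. \<beta> ^ card T * G_on \<beta> d (diagram (add_boxes ?m T)) ?x y"
  have "G \<beta> d mu ?x y * (wt \<beta> d y la mu - 1)
      = x_factor \<beta> ?x d * content_factor \<beta> y d ?m * G_on \<beta> d (diagram ?m) ?x y - G_on \<beta> d (diagram ?m) ?x y"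
    unfolding G_eq_G_on wt_eq[OF yne] by (simp add: algebra_simps)
  also have "\<dots> = (\<Sum>T\<in>Pow (addable_rows ?m). ?G T) - ?G {}"
    unfolding grothendieck_pieri[OF yne is_partition_fun_part[OF mu]] by (simp add: add_boxes_def)
  also have "\<dots> = (\<Sum>T\<in>Pow (addable_rows ?m) - {{}}. ?G T)"
    using finite_addable_rows[OF is_partition_fun_part[OF mu]] by (simp add: sum_diff1)
  also have "\<dots> = (\<Sum>nu\<in>{nu. covers nu mu}. \<beta> ^ (psize nu - psize mu) * G \<beta> d nu ?x y)"
    by (rule sum_covers_eq_sum_add_boxes[OF mu, symmetric])
  finally show ?thesis .
qed

end
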